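(* The following hold: $$\mathrm{Tr}[Pe^{i\epsilon\mathcal P}]=\mathrm{tr}[\mathbb 1].$$ For all $t_1,t_2\in\{0,\dots,N-1\}$ and all $i,j\in\{1,\dots,L\}$, $$\mathrm{Tr}\big[Pe^{i\epsilon\mathcal P}a_{t_1i}a^\dagger_{t_2j}\big]=\begin{cases}\mathrm{tr}[a_ia_j^\dagger], & t_1\ge t_2,\\ -\mathrm{tr}[a_j^\dagger a_i], & t_1<t_2.\end{cases}$$ Moreover, for all $t_1,t_2,i,j$, $$\mathrm{Tr}\big[Pe^{i\epsilon\mathcal P}a_{t_1i}a_{t_2j}\big]=0,\qquad \mathrm{Tr}\big[Pe^{i\epsilon\mathcal P}a^\dagger_{t_1i}a^\dagger_{t_2j}\big]=0.$$
   Context: Fix integers $L\ge1$, $N\ge1$, a real $\epsilon>0$, and set $T=\epsilon N$. The space $h$. Let $h$ be the fermionic Fock space of $L$ modes ($\dim h=2^L$), with vacuum $|0\rangle$ and ladder operators $a_i$ satisfying $\{a_i,a_j^\dagger\}=\delta_{ij}$ and $\{a_i,a_j\}=\{a_i^\dagger,a_j^\dagger\}=0$. The symbol $\mathrm{tr}$ is the trace on $h$. The space $\mathcal H$. Let $\mathcal H$ ($\dim\mathcal H=2^{LN}$) be the Fock space generated from a vacuum $|\Omega\rangle$ by $a_{ti}$, $t=0,\dots,N-1$, $i=1,\dots,L$, with $\{a_{ti},a^\dagger_{t'j}\}=\delta_{tt'}\delta_{ij}$ and $\{a_{ti},a_{t'j}\}=\{a^\dagger_{ti},a^\dagger_{t'j}\}=0$.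 The symbol $\mathrm{Tr}$ is the trace on $\mathcal H$. Time translations and parity. Set $\omega_n=(2n+1)\pi/T$ and $\hat a_{ni}=N^{-1/2}\sum_{t=0}^{N-1}e^{i\omega_n\epsilon t}a_{ti}$ for $n=0,\dots,N-1$. Define $$\mathcal P=\sum_{n,j}\omega_n\hat a^\dagger_{nj}\hat a_{nj},\qquad P=\exp\Big(i\pi\sum_{t,i}a^\dagger_{ti}a_{ti}\Big)$$ (the parity operator). *)

theory Defs
  imports Complex_Main
begin

text \<open>Concrete fermionic Fock space of M modes (labelled 0..<M): orthonormal basis
  indexed by occupied-mode sets S \<subseteq> {..<M}. Operators are matrices
  nat set \<Rightarrow> nat set \<Rightarrow> complex (only entries on fock M matter).
  Ladder operators via the Jordan-Wigner construction.\<close>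

definition fock :: "nat \<Rightarrow> nat set set" where
  "fock M = Pow {..<M}"

type_synonym op = "nat set \<Rightarrow> nat set \<Rightarrow> complex"

definition mmul :: "nat \<Rightarrow> op \<Rightarrow> op \<Rightarrow> op" where
  "mmul M A B = (\<lambda>S T. \<Sum>U\<in>fock M. A S U * B U T)"

definition mid :: op where
  "mid = (\<lambda>S T. if S = T then 1 else 0)"

definition madd :: "op \<Rightarrow> op \<Rightarrow> op" where
  "madd A B = (\<lambda>S T. A S T + B S T)"

definition mscale :: "complex \<Rightarrow> op \<Rightarrow> op" where
  "mscale c A = (\<lambda>S T. c * A S T)"

definition msum :: "'a set \<Rightarrow> ('a \<Rightarrow> op) \<Rightarrow> op" where
  "msum I f = (\<lambda>S T. \<Sum>x\<in>I. f x S T)"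

definition madj :: "op \<Rightarrow> op" where
  "madj A = (\<lambda>S T. cnj (A T S))"

fun mpow :: "nat \<Rightarrow> op \<Rightarrow> nat \<Rightarrow> op" where
  "mpow M A 0 = mid"
| "mpow M A (Suc n) = mmul M (mpow M A n) A"

definition mexp :: "nat \<Rightarrow> op \<Rightarrow> op" where
  "mexp M A = (\<lambda>S T. \<Sum>n. mpow M A n S T / of_nat (fact n))"

definition mtr :: "nat \<Rightarrow> op \<Rightarrow> complex" where
  "mtr M A = (\<Sum>S\<in>fock M. A S S)"

definition ann :: "nat \<Rightarrow> op" where
  "ann k = (\<lambda>S T. if k \<in> T \<and> S = T - {k} then (-1) ^ card {m\<in>T. m < k} else 0)"

definition cre :: "nat \<Rightarrow> op" where
  "cre k = madj (ann k)"

text \<open>The small space h: L modes; a_i (i = 1..L) is mode i-1.\<close>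
definition a_h :: "nat \<Rightarrow> op" where
  "a_h i = ann (i - 1)"

text \<open>The big space H: L*N modes; a_{t i} (t<N, i=1..L) is mode t*L + (i-1).\<close>
definition a_H :: "nat \<Rightarrow> nat \<Rightarrow> nat \<Rightarrow> op" where
  "a_H L t i = ann (t * L + (i - 1))"

definition omega :: "nat \<Rightarrow> real \<Rightarrow> nat \<Rightarrow> real" where
  "omega N \<epsilon> n = (2 * real n + 1) * pi / (\<epsilon> * real N)"

definition ahat :: "nat \<Rightarrow> nat \<Rightarrow> real \<Rightarrow> nat \<Rightarrow> nat \<Rightarrow> op" where
  "ahat L N \<epsilon> n i = mscale (1 / complex_of_real (sqrt (real N)))
     (msum {..<N} (\<lambda>t. mscale (exp (\<i> * complex_of_real (omega N \<epsilon> n * \<epsilon> * real t))) (a_H L t i)))"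

definition Pcal :: "nat \<Rightarrow> nat \<Rightarrow> real \<Rightarrow> op" where
  "Pcal L N \<epsilon> = msum ({..<N} \<times> {1..L})
     (\<lambda>(n, j). mscale (complex_of_real (omega N \<epsilon> n))
        (mmul (L * N) (madj (ahat L N \<epsilon> n j)) (ahat L N \<epsilon> n j)))"

definition Npar :: "nat \<Rightarrow> nat \<Rightarrow> op" where
  "Npar L N = mexp (L * N) (mscale (\<i> * complex_of_real pi)
     (msum ({..<N} \<times> {1..L}) (\<lambda>(t, i). mmul (L * N) (madj (a_H L t i)) (a_H L t i))))"

definition PE :: "nat \<Rightarrow> nat \<Rightarrow> real \<Rightarrow> op" where
  "PE L N \<epsilon> = mmul (L * N) (Npar L N)
     (mexp (L * N) (mscale (\<i> * complex_of_real \<epsilon>) (Pcal L N \<epsilon>)))"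

end

theory Submission
  imports Defs "HOL-Computational_Algebra.Polynomial"
begin

text \<open>
  The modes ahat_(n,i) arise from
  the a_(t,i) by a unitary Fourier matrix W whose phases z_n = cis ((2n + 1) pi / N) are the N-th
  roots of -1, so they again satisfy the canonical anticommutation relations and their
  occupation-number states form an orthonormal basis of the Fock space. In this basis
  P exp(i eps Pcal) is diagonal: on the state with occupied set A it acts by the product of -z_m
  over m in A. Hence Tr[P exp(i eps Pcal)] is the product of 1 - z_m over all modes, which is
  2^L because the z_n are the roots of X^N + 1. For a_k a_l^+ the state with set A contributes
  the sum of conj (W m k) W m l over m not in A, and summing over A gives
  2^L times the sum of conj (W m k) W m l / (1 - z_m). Expanding 1 / (1 - z) as half the sum of
  z^s over s < N turns this into a geometric sum, equal to 2^(L-1) or -2^(L-1) according to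
  t1 >= t2 or t1 < t2 (and 0 unless i = j). Traces with two annihilators or two creators vanish
  since the basis states have definite particle number.
\<close>

section \<open>Ladder operators on amplitude vectors\<close>

type_synonym vec = "nat set \<Rightarrow> complex"

definition jw_sign :: "nat set \<Rightarrow> nat \<Rightarrow> complex" where
  "jw_sign S k = (-1) ^ card {m\<in>S. m < k}"

definition ann_vec :: "nat \<Rightarrow> vec \<Rightarrow> vec" where
  "ann_vec k x = (\<lambda>S. if k \<notin> S then jw_sign S k * x (insert k S) else 0)"

definition cre_vec :: "nat \<Rightarrow> vec \<Rightarrow> vec" where
  "cre_vec k x = (\<lambda>S. if k \<in> S then jw_sign S k * x (S - {k}) else 0)"

definition mvmul :: "nat \<Rightarrow> op \<Rightarrow> vec \<Rightarrow> vec" where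
  "mvmul M A x = (\<lambda>S. \<Sum>U\<in>fock M. A S U * x U)"

definition vinner :: "nat \<Rightarrow> vec \<Rightarrow> vec \<Rightarrow> complex" where
  "vinner M x y = (\<Sum>S\<in>fock M. cnj (x S) * y S)"

definition vacuum :: "vec" where
  "vacuum = (\<lambda>S. if S = {} then 1 else 0)"

definition unit_vec :: "nat set \<Rightarrow> vec" where
  "unit_vec S = (\<lambda>T. if T = S then 1 else 0)"

lemma finite_fock [simp]: "finite (fock M)"
  by (simp add: fock_def)

lemma fock_subset: "S \<in> fock M \<Longrightarrow> S \<subseteq> {..<M}"
  by (simp add: fock_def)

lemma finite_if_fock: "S \<in> fock M \<Longrightarrow> finite S"
  by (auto simp: fock_def intro: finite_subset)

lemma insert_in_fock: "S \<in> fock M \<Longrightarrow> k < M \<Longrightarrow> insert k S \<in> fock M"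
  by (auto simp: fock_def)

lemma Diff_in_fock: "S \<in> fock M \<Longrightarrow> S - {k} \<in> fock M"
  by (auto simp: fock_def)

lemma jw_sign_square [simp]: "jw_sign S k * jw_sign S k = 1"
  by (simp add: jw_sign_def flip: power_add mult_2)

lemma cnj_jw_sign [simp]: "cnj (jw_sign S k) = jw_sign S k"
  by (simp add: jw_sign_def)

lemma jw_sign_insert: "jw_sign (insert a S) k = (if a < k \<and> a \<notin> S then - jw_sign S k else jw_sign S k)"
proof (cases "a < k \<and> a \<notin> S")
  case True
  have "finite {m\<in>S. m < k}"
    by (rule finite_subset[of _ "{..<k}"]) auto
  moreover have "{m\<in>insert a S. m < k} = insert a {m\<in>S. m < k}"
    using True by auto
  ultimately show ?thesis
    using True by (simp add: jw_sign_def)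
next
  case False
  then have "{m\<in>insert a S. m < k} = {m\<in>S. m < k}" by auto
  with False show ?thesis by (simp add: jw_sign_def)
qed

lemma jw_sign_remove: "jw_sign (S - {a}) k = (if a < k \<and> a \<in> S then - jw_sign S k else jw_sign S k)"
  using jw_sign_insert[of a "S - {a}" k] by (cases "a \<in> S") (auto simp: insert_absorb)

lemma jw_sign_insert_self [simp]: "jw_sign (insert k S) k = jw_sign S k"
  by (simp add: jw_sign_insert)

lemma jw_sign_remove_self [simp]: "jw_sign (S - {k}) k = jw_sign S k"
  by (simp add: jw_sign_remove)

lemma jw_sign_Min [simp]: "finite S \<Longrightarrow> jw_sign S (Min S) = 1"
proof -
  assume "finite S"
  then have "{m\<in>S. m < Min S} = {}"
    by (auto dest: Min_le)
  then show ?thesis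
    unfolding jw_sign_def by (simp only: card.empty power_0)
qed

lemma ann_eq_jw_sign: "ann k S T = (if k \<in> T \<and> S = T - {k} then jw_sign T k else 0)"
  by (simp add: ann_def jw_sign_def)

lemma ann_cre_vec_anticomm:
  "ann_vec k (cre_vec l x) S + cre_vec l (ann_vec k x) S = (if k = l then x S else 0)"
proof (cases "k = l")
  case True
  then show ?thesis
    by (auto simp: ann_vec_def cre_vec_def insert_absorb mult.assoc[symmetric])
next
  case False
  then have "insert k S - {l} = insert k (S - {l})" by auto
  with False show ?thesis
    by (auto simp: ann_vec_def cre_vec_def jw_sign_insert jw_sign_remove insert_absorb)
qed

lemma cre_cre_vec_anticomm: "cre_vec k (cre_vec l x) S + cre_vec l (cre_vec k x) S = 0"
proof -
  have "S - {k} - {l} = S - {l} - {k}" by auto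
  then show ?thesis
    by (cases "k = l") (auto simp: cre_vec_def jw_sign_remove)
qed

lemma ann_vec_linear:
  "ann_vec k (\<lambda>T. \<Sum>i\<in>I. c i * f i T) S = (\<Sum>i\<in>I. c i * ann_vec k (f i) S)"
  by (simp add: ann_vec_def sum_distrib_left mult.left_commute)

lemma cre_vec_linear:
  "cre_vec k (\<lambda>T. \<Sum>i\<in>I. c i * f i T) S = (\<Sum>i\<in>I. c i * cre_vec k (f i) S)"
  by (simp add: cre_vec_def sum_distrib_left mult.left_commute)

lemma ann_vec_cong:
  "k < M \<Longrightarrow> S \<in> fock M \<Longrightarrow> (\<And>U. U \<in> fock M \<Longrightarrow> x U = y U) \<Longrightarrow> ann_vec k x S = ann_vec k y S"
  by (simp add: ann_vec_def insert_in_fock)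

lemma cre_vec_cong:
  "S \<in> fock M \<Longrightarrow> (\<And>U. U \<in> fock M \<Longrightarrow> x U = y U) \<Longrightarrow> cre_vec k x S = cre_vec k y S"
  by (simp add: cre_vec_def Diff_in_fock)

lemma cre_ann_vec_self: "cre_vec k (ann_vec k x) S = (if k \<in> S then x S else 0)"
  by (auto simp: cre_vec_def ann_vec_def insert_absorb mult.assoc[symmetric])

lemma mvmul_ann:
  assumes "k < M" "S \<in> fock M"
  shows "mvmul M (ann k) x S = ann_vec k x S"
proof (cases "k \<in> S")
  case True
  then show ?thesis
    by (auto simp: mvmul_def ann_def ann_vec_def intro!: sum.neutral)
next
  case False
  have "mvmul M (ann k) x S = (\<Sum>U\<in>fock M. if U = insert k S then jw_sign S k * x U else 0)"
    unfolding mvmul_def ann_eq_jw_sign using False by (intro sum.cong) (auto simp: insert_absorb)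
  also have "\<dots> = ann_vec k x S"
    using False insert_in_fock[OF assms(2,1)] by (simp add: ann_vec_def)
  finally show ?thesis .
qed

lemma mvmul_cre:
  assumes "S \<in> fock M"
  shows "mvmul M (cre k) x S = cre_vec k x S"
proof (cases "k \<in> S")
  case False
  then show ?thesis
    by (auto simp: mvmul_def cre_def madj_def ann_def cre_vec_def intro!: sum.neutral)
next
  case True
  have "mvmul M (cre k) x S = (\<Sum>U\<in>fock M. if U = S - {k} then jw_sign S k * x U else 0)"
    unfolding mvmul_def cre_def madj_def ann_eq_jw_sign using True by (intro sum.cong) auto
  also have "\<dots> = cre_vec k x S"
    using True Diff_in_fock[OF assms] by (simp add: cre_vec_def)
  finally show ?thesis .
qed

lemma mvmul_unit_vec: "T \<in> fock M \<Longrightarrow> mvmul M A (unit_vec T) S = A S T"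
  by (simp add: mvmul_def unit_vec_def if_distrib[of "\<lambda>x. _ * x"] cong: if_cong)

lemma mvmul_mid: "S \<in> fock M \<Longrightarrow> mvmul M mid x S = x S"
  by (simp add: mvmul_def mid_def if_distrib[of "\<lambda>x. x * _"] cong: if_cong)

lemma mvmul_mscale: "mvmul M (mscale c A) x S = c * mvmul M A x S"
  by (simp add: mvmul_def mscale_def sum_distrib_left mult.assoc)

lemma mvmul_msum: "mvmul M (msum I f) x S = (\<Sum>i\<in>I. mvmul M (f i) x S)"
  by (simp add: mvmul_def msum_def sum_distrib_right sum.swap[of _ I])

lemma madj_mscale: "madj (mscale c A) = mscale (cnj c) (madj A)"
  by (simp add: madj_def mscale_def fun_eq_iff)

lemma madj_msum: "madj (msum I f) = msum I (\<lambda>i. madj (f i))"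
  by (simp add: madj_def msum_def fun_eq_iff)

lemma mmul_assoc: "mmul M (mmul M A B) C = mmul M A (mmul M B C)"
proof (intro ext)
  fix S T
  have "mmul M (mmul M A B) C S T = (\<Sum>U\<in>fock M. \<Sum>V\<in>fock M. A S V * B V U * C U T)"
    by (simp add: mmul_def sum_distrib_right)
  also have "\<dots> = (\<Sum>V\<in>fock M. \<Sum>U\<in>fock M. A S V * B V U * C U T)"
    by (rule sum.swap)
  also have "\<dots> = mmul M A (mmul M B C) S T"
    by (simp add: mmul_def sum_distrib_left mult.assoc)
  finally show "mmul M (mmul M A B) C S T = mmul M A (mmul M B C) S T" .
qed

lemma mvmul_mmul: "mvmul M (mmul M A B) x S = mvmul M A (mvmul M B x) S"
proof -
  have "mvmul M (mmul M A B) x S = (\<Sum>U\<in>fock M. \<Sum>V\<in>fock M. A S V * B V U * x U)"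
    by (simp add: mvmul_def mmul_def sum_distrib_right)
  also have "\<dots> = (\<Sum>V\<in>fock M. \<Sum>U\<in>fock M. A S V * B V U * x U)"
    by (rule sum.swap)
  also have "\<dots> = mvmul M A (mvmul M B x) S"
    by (simp add: mvmul_def sum_distrib_left mult.assoc)
  finally show ?thesis .
qed

lemma mvmul_ann_ann:
  assumes "k < M" "l < M" "S \<in> fock M"
  shows "mvmul M (mmul M (ann k) (ann l)) x S = ann_vec k (ann_vec l x) S"
  unfolding mvmul_mmul mvmul_ann[OF assms(1,3)]
  using assms by (auto intro!: ann_vec_cong mvmul_ann)

lemma mvmul_ann_cre:
  assumes "k < M" "S \<in> fock M"
  shows "mvmul M (mmul M (ann k) (cre l)) x S = ann_vec k (cre_vec l x) S"
  unfolding mvmul_mmul mvmul_ann[OF assms]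
  using assms by (auto intro!: ann_vec_cong mvmul_cre)

lemma mvmul_cre_cre:
  assumes "S \<in> fock M"
  shows "mvmul M (mmul M (cre k) (cre l)) x S = cre_vec k (cre_vec l x) S"
  unfolding mvmul_mmul mvmul_cre[OF assms]
  using assms by (auto intro!: cre_vec_cong mvmul_cre)

lemma mvmul_cre_ann:
  assumes "l < M" "S \<in> fock M"
  shows "mvmul M (mmul M (cre k) (ann l)) x S = cre_vec k (ann_vec l x) S"
  unfolding mvmul_mmul mvmul_cre[OF assms(2)]
  using assms by (auto intro!: cre_vec_cong mvmul_ann)

lemma vinner_cong: "(\<And>S. S \<in> fock M \<Longrightarrow> y S = y' S) \<Longrightarrow> vinner M x y = vinner M x y'"
  by (simp add: vinner_def)

lemma vinner_commute: "vinner M x y = cnj (vinner M y x)"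
  by (simp add: vinner_def mult.commute)

lemma vinner_linear_right:
  "vinner M x (\<lambda>T. \<Sum>i\<in>I. c i * f i T) = (\<Sum>i\<in>I. c i * vinner M x (f i))"
  unfolding vinner_def by (simp add: sum_distrib_left sum.swap[of _ "fock M"] mult.left_commute)

lemma vinner_linear_left:
  "vinner M (\<lambda>T. \<Sum>i\<in>I. c i * f i T) y = (\<Sum>i\<in>I. cnj (c i) * vinner M (f i) y)"
  unfolding vinner_def by (simp add: sum_distrib_left sum_distrib_right sum.swap[of _ "fock M"] mult.assoc)

lemma vinner_scale_left: "vinner M (\<lambda>T. c * x T) y = cnj c * vinner M x y"
  unfolding vinner_def by (simp add: sum_distrib_left mult.assoc)

lemma vinner_scale_right: "vinner M x (\<lambda>T. c * y T) = c * vinner M x y"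
  unfolding vinner_def by (simp add: sum_distrib_left mult.left_commute)

lemma vinner_ann_vec:
  assumes "k < M"
  shows "vinner M x (ann_vec k y) = vinner M (cre_vec k x) y"
proof -
  have "vinner M x (ann_vec k y) = (\<Sum>S\<in>{S\<in>fock M. k \<notin> S}. cnj (x S) * (jw_sign S k * y (insert k S)))"
    unfolding vinner_def ann_vec_def by (rule sum.mono_neutral_cong_right) auto
  also have "\<dots> = (\<Sum>T\<in>{T\<in>fock M. k \<in> T}. cnj (x (T - {k})) * (jw_sign T k * y T))"
    by (rule sum.reindex_bij_witness[where i="\<lambda>T. T - {k}" and j="insert k"])
      (auto simp: insert_in_fock Diff_in_fock assms insert_absorb)
  also have "\<dots> = vinner M (cre_vec k x) y"
    unfolding vinner_def cre_vec_def by (rule sum.mono_neutral_cong_left) auto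
  finally show ?thesis .
qed

lemma vinner_vacuum [simp]: "vinner M vacuum vacuum = 1"
proof -
  have "vinner M vacuum vacuum = (\<Sum>S\<in>fock M. if S = {} then 1 else 0)"
    unfolding vinner_def vacuum_def by (intro sum.cong) auto
  then show ?thesis
    by (simp add: fock_def)
qed

lemma card_Pow_lessThan_not_containing:
  "k < M \<Longrightarrow> card {S \<in> Pow {..<M}. k \<notin> S} = 2 ^ (M - 1)"
proof -
  assume "k < M"
  have "{S \<in> Pow {..<M}. k \<notin> S} = Pow ({..<M} - {k})"
    by auto
  with \<open>k < M\<close> show ?thesis
    by (simp add: card_Pow)
qed

lemma card_Pow_lessThan_containing:
  "k < M \<Longrightarrow> card {S \<in> Pow {..<M}. k \<in> S} = 2 ^ (M - 1)"
proof -
  assume "k < M"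
  have "{S \<in> Pow {..<M}. k \<in> S} = insert k ` {S \<in> Pow {..<M}. k \<notin> S}"
  proof (intro equalityI subsetI)
    fix S assume "S \<in> {S \<in> Pow {..<M}. k \<in> S}"
    then have "S = insert k (S - {k})" "S - {k} \<in> {S \<in> Pow {..<M}. k \<notin> S}"
      by auto
    then show "S \<in> insert k ` {S \<in> Pow {..<M}. k \<notin> S}"
      by (rule image_eqI)
  qed (use \<open>k < M\<close> in auto)
  moreover have "inj_on (insert k) {S \<in> Pow {..<M}. k \<notin> S}"
  proof (rule inj_onI)
    fix X Y assume "X \<in> {S \<in> Pow {..<M}. k \<notin> S}" "Y \<in> {S \<in> Pow {..<M}. k \<notin> S}"
      and "insert k X = insert k Y"
    then have "insert k X - {k} = insert k Y - {k}" "k \<notin> X" "k \<notin> Y"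
      by auto
    then show "X = Y"
      by simp
  qed
  ultimately show ?thesis
    using card_Pow_lessThan_not_containing[OF \<open>k < M\<close>] by (simp add: card_image)
qed

lemma mtr_ann_cre:
  assumes "k < M" "l < M"
  shows "mtr M (mmul M (ann k) (cre l)) = (if k = l then 2 ^ (M - 1) else 0)"
proof -
  have "mmul M (ann k) (cre l) S S = of_bool (k \<notin> S \<and> k = l)" if "S \<in> fock M" for S
  proof -
    have "mmul M (ann k) (cre l) S S = ann_vec k (cre_vec l (unit_vec S)) S"
      using that assms(1) by (simp add: mvmul_unit_vec[symmetric] mvmul_ann_cre)
    moreover have "k \<notin> S \<Longrightarrow> insert k S - {l} = S \<longleftrightarrow> k = l"
      by auto
    ultimately show ?thesis
      by (auto simp: ann_vec_def cre_vec_def unit_vec_def)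
  qed
  then have "mtr M (mmul M (ann k) (cre l)) = (\<Sum>S\<in>fock M. of_bool (k \<notin> S \<and> k = l))"
    unfolding mtr_def by (intro sum.cong refl) simp
  also have "\<dots> = (if k = l then of_nat (card {S \<in> Pow {..<M}. k \<notin> S}) else 0)"
    by (cases "k = l") (simp_all add: fock_def Int_def)
  finally show ?thesis
    using card_Pow_lessThan_not_containing[OF assms(1)] by auto
qed

lemma mtr_cre_ann:
  assumes "k < M" "l < M"
  shows "mtr M (mmul M (cre l) (ann k)) = (if k = l then 2 ^ (M - 1) else 0)"
proof -
  have "mmul M (cre l) (ann k) S S = of_bool (k \<in> S \<and> k = l)" if "S \<in> fock M" for S
  proof -
    have "mmul M (cre l) (ann k) S S = cre_vec l (ann_vec k (unit_vec S)) S"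
      using that assms(1) by (simp add: mvmul_unit_vec[symmetric] mvmul_cre_ann)
    moreover have "l \<in> S \<Longrightarrow> k \<in> S \<Longrightarrow> S - {l} = S - {k} \<longleftrightarrow> k = l"
      by auto
    ultimately show ?thesis
      by (auto simp: ann_vec_def cre_vec_def unit_vec_def)
  qed
  then have "mtr M (mmul M (cre l) (ann k)) = (\<Sum>S\<in>fock M. of_bool (k \<in> S \<and> k = l))"
    unfolding mtr_def by (intro sum.cong refl) simp
  also have "\<dots> = (if k = l then of_nat (card {S \<in> Pow {..<M}. k \<in> S}) else 0)"
    by (cases "k = l") (simp_all add: fock_def Int_def)
  finally show ?thesis
    using card_Pow_lessThan_containing[OF assms(1)] by auto
qed

lemma mtr_mid: "mtr M mid = 2 ^ M"
  by (simp add: mtr_def mid_def fock_def card_Pow)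

definition homogeneous :: "nat \<Rightarrow> vec \<Rightarrow> bool" where
  "homogeneous n x \<longleftrightarrow> (\<forall>S. finite S \<longrightarrow> x S \<noteq> 0 \<longrightarrow> card S = n)"

lemma homogeneous_cre_vec:
  assumes "homogeneous n x"
  shows "homogeneous (Suc n) (cre_vec k x)"
  unfolding homogeneous_def
proof (intro allI impI)
  fix S assume S: "finite S" "cre_vec k x S \<noteq> 0"
  then have k: "k \<in> S" "x (S - {k}) \<noteq> 0"
    by (auto simp: cre_vec_def split: if_splits)
  then have "card (S - {k}) = n"
    using assms S(1) unfolding homogeneous_def by blast
  then show "card S = Suc n"
    using S(1) k(1) card_Suc_Diff1 by metis
qed

lemma vinner_homogeneous_orthogonal:
  assumes "homogeneous n x" "homogeneous n' y" "n \<noteq> n'"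
  shows "vinner M x y = 0"
  unfolding vinner_def
proof (intro sum.neutral ballI)
  fix S assume "S \<in> fock M"
  then have "finite S"
    by (rule finite_if_fock)
  show "cnj (x S) * y S = 0"
  proof (cases "x S = 0")
    case False
    then have "card S = n"
      using assms(1) \<open>finite S\<close> unfolding homogeneous_def by blast
    then have "y S = 0"
      using assms(2,3) \<open>finite S\<close> unfolding homogeneous_def by blast
    then show ?thesis by simp
  qed simp
qed

section \<open>Unitary changes of modes\<close>

locale unitary_modes =
  fixes M :: nat and W :: "nat \<Rightarrow> nat \<Rightarrow> complex"
  assumes unitary_rows:
      "m < M \<Longrightarrow> m' < M \<Longrightarrow> (\<Sum>k<M. W m k * cnj (W m' k)) = (if m = m' then 1 else 0)"
    and unitary_cols:
      "k < M \<Longrightarrow> k' < M \<Longrightarrow> (\<Sum>m<M. cnj (W m k) * W m k') = (if k = k' then 1 else 0)"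
begin

definition bann :: "nat \<Rightarrow> vec \<Rightarrow> vec" where
  "bann m x = (\<lambda>S. \<Sum>k<M. W m k * ann_vec k x S)"

definition bcre :: "nat \<Rightarrow> vec \<Rightarrow> vec" where
  "bcre m x = (\<lambda>S. \<Sum>k<M. cnj (W m k) * cre_vec k x S)"

lemma bcre_linear: "bcre m (\<lambda>T. \<Sum>i\<in>I. c i * f i T) S = (\<Sum>i\<in>I. c i * bcre m (f i) S)"
  unfolding bcre_def cre_vec_linear sum_distrib_left
  by (subst sum.swap) (simp add: mult.left_commute)

lemma bcre_scale: "bcre m (\<lambda>T. c * f T) S = c * bcre m f S"
  using bcre_linear[of m "\<lambda>_. c" "\<lambda>_. f" "{()}"] by simp

lemma bcre_zero [simp]: "bcre m (\<lambda>T. 0) S = 0"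
  by (simp add: bcre_def cre_vec_def cong: if_cong)

lemma bcre_cong:
  "S \<in> fock M \<Longrightarrow> (\<And>U. U \<in> fock M \<Longrightarrow> x U = y U) \<Longrightarrow> bcre m x S = bcre m y S"
  unfolding bcre_def by (intro sum.cong refl arg_cong2[where f = "(*)"] cre_vec_cong)

lemma bann_bcre_anticomm:
  assumes "m < M" "m' < M"
  shows "bann m (bcre m' x) S + bcre m' (bann m x) S = (if m = m' then x S else 0)"
proof -
  have ac: "bann m (bcre m' x) S = (\<Sum>k<M. \<Sum>l<M. W m k * cnj (W m' l) * ann_vec k (cre_vec l x) S)"
    unfolding bann_def bcre_def ann_vec_linear by (simp add: sum_distrib_left mult.assoc)
  have "bcre m' (bann m x) S = (\<Sum>l<M. \<Sum>k<M. W m k * cnj (W m' l) * cre_vec l (ann_vec k x) S)"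
    unfolding bann_def bcre_def cre_vec_linear by (simp add: sum_distrib_left mult.assoc mult.left_commute)
  also have "\<dots> = (\<Sum>k<M. \<Sum>l<M. W m k * cnj (W m' l) * cre_vec l (ann_vec k x) S)"
    by (rule sum.swap)
  finally have ca: "bcre m' (bann m x) S = \<dots>" .
  have "bann m (bcre m' x) S + bcre m' (bann m x) S
      = (\<Sum>k<M. \<Sum>l<M. W m k * cnj (W m' l) * (ann_vec k (cre_vec l x) S + cre_vec l (ann_vec k x) S))"
    unfolding ac ca by (simp add: sum.distrib[symmetric] distrib_left)
  also have "\<dots> = (\<Sum>k<M. W m k * cnj (W m' k)) * x S"
    by (simp add: ann_cre_vec_anticomm if_distrib[of "\<lambda>y. _ * y"] sum_distrib_right cong: if_cong)
  also have "\<dots> = (if m = m' then x S else 0)"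
    using unitary_rows[OF assms] by simp
  finally show ?thesis .
qed

lemma bcre_bcre_anticomm: "bcre m (bcre m' x) S + bcre m' (bcre m x) S = 0"
proof -
  have cc: "bcre m (bcre m' x) S = (\<Sum>k<M. \<Sum>l<M. cnj (W m k) * cnj (W m' l) * cre_vec k (cre_vec l x) S)"
    unfolding bcre_def cre_vec_linear by (simp add: sum_distrib_left mult.assoc)
  have "bcre m' (bcre m x) S = (\<Sum>l<M. \<Sum>k<M. cnj (W m k) * cnj (W m' l) * cre_vec l (cre_vec k x) S)"
    unfolding bcre_def cre_vec_linear by (simp add: sum_distrib_left mult.assoc mult.left_commute)
  also have "\<dots> = (\<Sum>k<M. \<Sum>l<M. cnj (W m k) * cnj (W m' l) * cre_vec l (cre_vec k x) S)"
    by (rule sum.swap)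
  finally have cc': "bcre m' (bcre m x) S = \<dots>" .
  show ?thesis
    unfolding cc cc' by (simp add: sum.distrib[symmetric] distrib_left[symmetric] cre_cre_vec_anticomm)
qed

lemma bcre_bcre_self: "bcre m (bcre m x) S = 0"
  using bcre_bcre_anticomm[of m m x S] by simp

lemma bann_vacuum: "bann m vacuum = (\<lambda>S. 0)"
  by (simp add: bann_def ann_vec_def vacuum_def fun_eq_iff cong: if_cong)

lemma vinner_bann: "vinner M x (bann m y) = vinner M (bcre m x) y"
  unfolding bann_def bcre_def vinner_linear_left vinner_linear_right
  by (simp add: vinner_ann_vec)

lemma vinner_bcre: "vinner M x (bcre m y) = vinner M (bann m x) y"
  by (metis vinner_bann vinner_commute)

lemma ann_vec_eq_bann_sum:
  assumes "k < M"
  shows "ann_vec k x = (\<lambda>S. \<Sum>m<M. cnj (W m k) * bann m x S)"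
proof
  fix S
  have "(\<Sum>m<M. cnj (W m k) * bann m x S) = (\<Sum>l<M. (\<Sum>m<M. cnj (W m k) * W m l) * ann_vec l x S)"
    unfolding bann_def sum_distrib_left sum_distrib_right
    by (subst sum.swap) (simp add: mult.assoc)
  also have "\<dots> = ann_vec k x S"
    using assms by (simp add: unitary_cols if_distrib[of "\<lambda>y. y * _"] cong: if_cong)
  finally show "ann_vec k x S = (\<Sum>m<M. cnj (W m k) * bann m x S)" by simp
qed

lemma cre_vec_eq_bcre_sum:
  assumes "k < M"
  shows "cre_vec k x = (\<lambda>S. \<Sum>m<M. W m k * bcre m x S)"
proof
  fix S
  have cols': "(\<Sum>m<M. W m k * cnj (W m l)) = (if k = l then 1 else 0)" if "l < M" for l
    using arg_cong[OF unitary_cols[OF assms that], of cnj] by (simp add: mult.commute)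
  have "(\<Sum>m<M. W m k * bcre m x S) = (\<Sum>l<M. (\<Sum>m<M. W m k * cnj (W m l)) * cre_vec l x S)"
    unfolding bcre_def sum_distrib_left sum_distrib_right
    by (subst sum.swap) (simp add: mult.assoc)
  also have "\<dots> = cre_vec k x S"
    using assms by (simp add: cols' if_distrib[of "\<lambda>y. y * _"] cong: if_cong)
  finally show "cre_vec k x S = (\<Sum>m<M. W m k * bcre m x S)" by simp
qed

primrec bstate_list :: "nat list \<Rightarrow> vec" where
  "bstate_list [] = vacuum"
| "bstate_list (m # ms) = bcre m (bstate_list ms)"

definition bstate :: "nat set \<Rightarrow> vec" where
  "bstate A = bstate_list (sorted_list_of_set A)"

lemma bann_bstate_list:
  assumes "sorted_wrt (<) ns" "set ns \<subseteq> {..<M}" "m < M"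
  shows "bann m (bstate_list ns) S
    = (if m \<in> set ns then (-1) ^ length (filter (\<lambda>x. x < m) ns) * bstate_list (remove1 m ns) S else 0)"
  using assms(1,2)
proof (induction ns arbitrary: S)
  case Nil
  then show ?case by (simp add: bann_vacuum)
next
  case (Cons n ns)
  have n: "n < M" and m_notin: "m = n \<Longrightarrow> m \<notin> set ns" and less: "m \<in> set ns \<Longrightarrow> n < m"
    using Cons.prems by auto
  have IH: "bann m (bstate_list ns)
      = (\<lambda>S. if m \<in> set ns then (-1) ^ length (filter (\<lambda>x. x < m) ns) * bstate_list (remove1 m ns) S else 0)"
    using Cons by auto
  have "bann m (bstate_list (n # ns)) S
      = (if m = n then bstate_list ns S else 0) - bcre n (bann m (bstate_list ns)) S"
    using bann_bcre_anticomm[OF assms(3) n, of "bstate_list ns" S] by (simp add: algebra_simps)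
  also have "\<dots> = (if m \<in> set (n # ns)
      then (-1) ^ length (filter (\<lambda>x. x < m) (n # ns)) * bstate_list (remove1 m (n # ns)) S else 0)"
  proof (cases "m = n")
    case True
    then have "filter (\<lambda>x. x < m) ns = []" and "bann m (bstate_list ns) = (\<lambda>S. 0)"
      using Cons.prems IH by (auto simp: filter_empty_conv)
    with True m_notin show ?thesis by simp
  next
    case False
    with less show ?thesis by (simp add: IH bcre_scale)
  qed
  finally show ?case .
qed

lemma bcre_bstate_list:
  assumes "sorted_wrt (<) ns" "set ns \<subseteq> {..<M}"
  shows "bcre m (bstate_list ns) S
    = (if m \<in> set ns then 0 else (-1) ^ length (filter (\<lambda>x. x < m) ns) * bstate_list (insort m ns) S)"
  using assms
proof (induction ns arbitrary: S)
  case Nil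
  then show ?case by simp
next
  case (Cons n ns)
  have IH: "bcre m (bstate_list ns)
      = (\<lambda>S. if m \<in> set ns then 0 else (-1) ^ length (filter (\<lambda>x. x < m) ns) * bstate_list (insort m ns) S)"
    using Cons by auto
  consider "m = n" | "m < n" | "n < m" by linarith
  then show ?case
  proof cases
    case 1
    then show ?thesis by (simp add: bcre_bcre_self)
  next
    case 2
    then have "m \<notin> set (n # ns)" "filter (\<lambda>x. x < m) (n # ns) = []"
      using Cons.prems by (auto simp: filter_empty_conv)
    with 2 show ?thesis by simp
  next
    case 3
    have "bcre m (bstate_list (n # ns)) S = - bcre n (bcre m (bstate_list ns)) S"
      using bcre_bcre_anticomm[of m n "bstate_list ns" S] by (simp add: eq_neg_iff_add_eq_0)
    with 3 show ?thesis by (cases "m \<in> set ns") (simp_all add: IH bcre_scale)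
  qed
qed

lemma homogeneous_bstate_list: "homogeneous (length ms) (bstate_list ms)"
  unfolding homogeneous_def
proof (induction ms)
  case Nil
  then show ?case by (simp add: vacuum_def)
next
  case (Cons m ms)
  show ?case
  proof (intro allI impI)
    fix S assume S: "finite S" "bstate_list (m # ms) S \<noteq> 0"
    then obtain k where "cnj (W m k) * cre_vec k (bstate_list ms) S \<noteq> 0"
      by (auto simp: bcre_def elim: sum.not_neutral_contains_not_neutral)
    then have k: "k \<in> S" "bstate_list ms (S - {k}) \<noteq> 0"
      by (auto simp: cre_vec_def split: if_splits)
    then have "card (S - {k}) = length ms"
      using Cons.IH S(1) by blast
    moreover have "card S = Suc (card (S - {k}))"
      using S(1) k(1) by (simp only: card_Suc_Diff1)
    ultimately show "card S = length (m # ms)"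
      by simp
  qed
qed

lemma length_filter_sorted_list_of_set:
  "finite A \<Longrightarrow> length (filter (\<lambda>x. x < m) (sorted_list_of_set A)) = card {x\<in>A. x < m}"
  by (simp add: distinct_length_filter Int_def conj_commute)

lemma bann_bstate:
  assumes "A \<in> fock M" "m < M"
  shows "bann m (bstate A) = (\<lambda>S. (if m \<in> A then jw_sign A m else 0) * bstate (A - {m}) S)"
  using bann_bstate_list[of "sorted_list_of_set A" m] assms finite_if_fock[OF assms(1)] fock_subset[OF assms(1)]
  by (auto simp: bstate_def jw_sign_def length_filter_sorted_list_of_set sorted_list_of_set_remove)

lemma bcre_bstate:
  assumes "A \<in> fock M" "m < M"
  shows "bcre m (bstate A) = (\<lambda>S. (if m \<in> A then 0 else jw_sign A m) * bstate (insert m A) S)"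
  using bcre_bstate_list[of "sorted_list_of_set A" m] assms finite_if_fock[OF assms(1)] fock_subset[OF assms(1)]
  by (auto simp: bstate_def jw_sign_def length_filter_sorted_list_of_set)

lemma bcre_bann_bstate:
  assumes "A \<in> fock M" "m < M"
  shows "bcre m (bann m (bstate A)) S = (if m \<in> A then bstate A S else 0)"
proof (cases "m \<in> A")
  case True
  have "bcre m (bann m (bstate A)) S = jw_sign A m * bcre m (bstate (A - {m})) S"
    using True by (simp add: bann_bstate[OF assms] bcre_scale)
  also have "\<dots> = bstate A S"
    using True bcre_bstate[OF Diff_in_fock[OF assms(1)] assms(2)]
    by (simp add: insert_absorb mult.assoc[symmetric])
  finally show ?thesis
    using True by simp
qed (simp add: bann_bstate[OF assms])

lemma homogeneous_bstate: "finite A \<Longrightarrow> homogeneous (card A) (bstate A)"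
  using homogeneous_bstate_list[of "sorted_list_of_set A"] by (simp add: bstate_def)

lemma bstate_empty [simp]: "bstate {} = vacuum"
  by (simp add: bstate_def)

lemma bstate_Min: "finite A \<Longrightarrow> A \<noteq> {} \<Longrightarrow> bstate A = bcre (Min A) (bstate (A - {Min A}))"
  by (simp add: bstate_def sorted_list_of_set_nonempty)

lemma vinner_vacuum_bstate:
  assumes "B \<in> fock M"
  shows "vinner M vacuum (bstate B) = (if B = {} then 1 else 0)"
proof (cases "B = {}")
  case False
  then have "vinner M vacuum (bstate B) = vinner M (bann (Min B) vacuum) (bstate (B - {Min B}))"
    using bstate_Min[OF finite_if_fock[OF assms]] by (simp add: vinner_bcre)
  with False show ?thesis
    by (simp add: bann_vacuum vinner_def)
qed simp

lemma bstate_orthonormal: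
  assumes "A \<in> fock M" "B \<in> fock M"
  shows "vinner M (bstate A) (bstate B) = (if A = B then 1 else 0)"
  using assms
proof (induction "card A" arbitrary: A B rule: less_induct)
  case less
  show ?case
  proof (cases "A = {}")
    case True
    then show ?thesis
      using vinner_vacuum_bstate[OF less.prems(2)] by auto
  next
    case False
    define m where "m = Min A"
    have fin: "finite A"
      using less.prems(1) by (rule finite_if_fock)
    then have m: "m \<in> A"
      using False by (simp add: m_def)
    then have m_less: "m < M"
      using fock_subset[OF less.prems(1)] by auto
    have "vinner M (bstate A) (bstate B) = vinner M (bstate (A - {m})) (bann m (bstate B))"
      using bstate_Min[OF fin False] by (simp add: m_def vinner_bann)
    also have "\<dots> = (if m \<in> B then jw_sign B m else 0) * vinner M (bstate (A - {m})) (bstate (B - {m}))"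
      by (simp add: bann_bstate[OF less.prems(2) m_less] vinner_scale_right)
    also have "\<dots> = (if A = B then 1 else 0)"
    proof (cases "m \<in> B")
      case True
      have "vinner M (bstate (A - {m})) (bstate (B - {m})) = (if A - {m} = B - {m} then 1 else 0)"
        using less.hyps[OF card_Diff1_less[OF fin m]] less.prems by (simp add: Diff_in_fock)
      moreover have "A - {m} = B - {m} \<longleftrightarrow> A = B"
        using m True by blast
      moreover have "A = B \<Longrightarrow> jw_sign B m = 1"
        using fin by (simp add: m_def)
      ultimately show ?thesis
        using True by simp
    qed (use m in auto)
    finally show ?thesis .
  qed
qed

definition in_bstate_span :: "vec \<Rightarrow> bool" where
  "in_bstate_span x \<longleftrightarrow> (\<exists>c. x = (\<lambda>T. \<Sum>A\<in>fock M. c A * bstate A T))"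

lemma in_bstate_span_scale_bstate: "A \<in> fock M \<Longrightarrow> in_bstate_span (\<lambda>T. a * bstate A T)"
  unfolding in_bstate_span_def
  by (rule exI[of _ "\<lambda>B. if B = A then a else 0"]) (simp add: if_distrib[of "\<lambda>y. y * _"] cong: if_cong)

lemma in_bstate_span_sum:
  "finite I \<Longrightarrow> (\<And>i. i \<in> I \<Longrightarrow> in_bstate_span (f i)) \<Longrightarrow> in_bstate_span (\<lambda>T. \<Sum>i\<in>I. f i T)"
proof (induction I rule: finite_induct)
  case empty
  show ?case
    unfolding in_bstate_span_def by (rule exI[of _ "\<lambda>_. 0"]) simp
next
  case (insert i I)
  then have "in_bstate_span (f i)" "in_bstate_span (\<lambda>T. \<Sum>j\<in>I. f j T)"
    by auto
  then obtain c d where c: "f i = (\<lambda>T. \<Sum>A\<in>fock M. c A * bstate A T)"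
      and d: "(\<lambda>T. \<Sum>j\<in>I. f j T) = (\<lambda>T. \<Sum>A\<in>fock M. d A * bstate A T)"
    unfolding in_bstate_span_def by blast
  have "(\<lambda>T. \<Sum>j\<in>insert i I. f j T) = (\<lambda>T. \<Sum>A\<in>fock M. (c A + d A) * bstate A T)"
  proof
    fix T
    have "(\<Sum>j\<in>insert i I. f j T) = f i T + (\<Sum>j\<in>I. f j T)"
      using insert.hyps by simp
    then show "(\<Sum>j\<in>insert i I. f j T) = (\<Sum>A\<in>fock M. (c A + d A) * bstate A T)"
      using fun_cong[OF c, of T] fun_cong[OF d, of T] by (simp add: sum.distrib distrib_right)
  qed
  then show ?case
    unfolding in_bstate_span_def by (rule exI[of _ "\<lambda>A. c A + d A"])
qed

lemma in_bstate_span_cre_vec: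
  assumes "in_bstate_span x" "k < M"
  shows "in_bstate_span (cre_vec k x)"
proof -
  obtain c where x: "x = (\<lambda>T. \<Sum>A\<in>fock M. c A * bstate A T)"
    using assms(1) unfolding in_bstate_span_def by blast
  have term_in_span: "in_bstate_span (\<lambda>T. c A * W m k * bcre m (bstate A) T)"
    if "A \<in> fock M" "m < M" for A m
  proof -
    have "(\<lambda>T. c A * W m k * bcre m (bstate A) T)
        = (\<lambda>T. (c A * W m k * (if m \<in> A then 0 else jw_sign A m)) * bstate (insert m A) T)"
      by (simp add: bcre_bstate[OF that] mult.assoc)
    then show ?thesis
      by (simp only: in_bstate_span_scale_bstate[OF insert_in_fock[OF that]])
  qed
  have "cre_vec k x = (\<lambda>T. \<Sum>A\<in>fock M. \<Sum>m<M. c A * W m k * bcre m (bstate A) T)"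
  proof
    fix T
    have "cre_vec k x T = (\<Sum>m<M. \<Sum>A\<in>fock M. c A * W m k * bcre m (bstate A) T)"
      by (simp add: cre_vec_eq_bcre_sum[OF assms(2)] x bcre_linear sum_distrib_left mult_ac)
    then show "cre_vec k x T = (\<Sum>A\<in>fock M. \<Sum>m<M. c A * W m k * bcre m (bstate A) T)"
      by (simp only: sum.swap[of _ "{..<M}"])
  qed
  then show ?thesis
    by (simp only:) (intro in_bstate_span_sum finite_fock finite_lessThan term_in_span, auto)
qed

lemma unit_vec_in_bstate_span: "S \<in> fock M \<Longrightarrow> in_bstate_span (unit_vec S)"
proof (induction "card S" arbitrary: S rule: less_induct)
  case less
  have fin: "finite S"
    using less.prems finite_if_fock by auto
  show ?case
  proof (cases "S = {}")
    case True
    then have "unit_vec S = (\<lambda>T. 1 * bstate {} T)"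
      by (simp add: unit_vec_def vacuum_def)
    then show ?thesis
      using in_bstate_span_scale_bstate[of "{}" 1] by (simp add: fock_def)
  next
    case False
    then have "Min S \<in> S"
      using fin by simp
    moreover have "Min S < M"
      using fock_subset[OF less.prems] \<open>Min S \<in> S\<close> by auto
    moreover have "unit_vec S = cre_vec (Min S) (unit_vec (S - {Min S}))"
      using \<open>Min S \<in> S\<close> fin by (auto simp: fun_eq_iff unit_vec_def cre_vec_def)
    ultimately show ?thesis
      using less card_Diff1_less[OF fin] by (simp add: Diff_in_fock in_bstate_span_cre_vec)
  qed
qed

lemma bstate_complete:
  assumes "S \<in> fock M" "T \<in> fock M"
  shows "(\<Sum>A\<in>fock M. bstate A T * cnj (bstate A S)) = (if T = S then 1 else 0)"
proof -
  obtain c where c: "unit_vec S = (\<lambda>T. \<Sum>A\<in>fock M. c A * bstate A T)"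
    using unit_vec_in_bstate_span[OF assms(1)] unfolding in_bstate_span_def by blast
  have "c B = cnj (bstate B S)" if "B \<in> fock M" for B
  proof -
    have "cnj (bstate B S) = vinner M (bstate B) (unit_vec S)"
      using assms(1) by (simp add: vinner_def unit_vec_def if_distrib[of "\<lambda>y. _ * y"] cong: if_cong)
    also have "\<dots> = (\<Sum>A\<in>fock M. c A * vinner M (bstate B) (bstate A))"
      by (simp add: c vinner_linear_right)
    also have "\<dots> = c B"
      using that by (simp add: bstate_orthonormal if_distrib[of "\<lambda>y. _ * y"] eq_commute cong: if_cong)
    finally show ?thesis ..
  qed
  then have "unit_vec S T = (\<Sum>A\<in>fock M. bstate A T * cnj (bstate A S))"
    by (simp add: c mult.commute)
  then show ?thesis
    by (simp add: unit_vec_def)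
qed

lemma vinner_bcre_bstate:
  assumes "A \<in> fock M" "m < M" "m' < M"
  shows "vinner M (bcre m (bstate A)) (bcre m' (bstate A)) = (if m = m' \<and> m \<notin> A then 1 else 0)"
proof -
  have "vinner M (bcre m (bstate A)) (bcre m' (bstate A))
      = cnj (if m \<in> A then 0 else jw_sign A m) * (if m' \<in> A then 0 else jw_sign A m')
        * vinner M (bstate (insert m A)) (bstate (insert m' A))"
    by (simp add: bcre_bstate assms vinner_scale_left vinner_scale_right)
  moreover have "m \<notin> A \<Longrightarrow> m' \<notin> A \<Longrightarrow> insert m A = insert m' A \<longleftrightarrow> m = m'"
    by auto
  ultimately show ?thesis
    using assms by (auto simp: bstate_orthonormal insert_in_fock)
qed

lemma vinner_bstate_ann_cre:
  assumes "A \<in> fock M" "k < M" "l < M"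
  shows "vinner M (bstate A) (ann_vec k (cre_vec l (bstate A)))
    = (\<Sum>m<M. cnj (W m k) * W m l * (if m \<in> A then 0 else 1))"
proof -
  have "vinner M (bstate A) (ann_vec k (cre_vec l (bstate A)))
      = (\<Sum>m<M. cnj (W m k) * (\<Sum>m'<M. W m' l * vinner M (bcre m (bstate A)) (bcre m' (bstate A))))"
    by (simp add: ann_vec_eq_bann_sum[OF assms(2)] cre_vec_eq_bcre_sum[OF assms(3)]
        vinner_linear_right vinner_bann)
  also have "\<dots> = (\<Sum>m<M. cnj (W m k) * W m l * (if m \<in> A then 0 else 1))"
  proof (intro sum.cong refl)
    fix m assume "m \<in> {..<M}"
    then have "(\<Sum>m'<M. W m' l * vinner M (bcre m (bstate A)) (bcre m' (bstate A)))
        = (\<Sum>m'<M. if m' = m then W m l * (if m \<in> A then 0 else 1) else 0)"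
      using assms by (intro sum.cong refl) (auto simp: vinner_bcre_bstate)
    with \<open>m \<in> {..<M}\<close> show "cnj (W m k) * (\<Sum>m'<M. W m' l * vinner M (bcre m (bstate A)) (bcre m' (bstate A)))
        = cnj (W m k) * W m l * (if m \<in> A then 0 else 1)"
      by simp
  qed
  finally show ?thesis .
qed

lemma vinner_bstate_ann_ann:
  assumes "A \<in> fock M" "k < M" "l < M"
  shows "vinner M (bstate A) (ann_vec k (ann_vec l (bstate A))) = 0"
proof -
  have "homogeneous (Suc (Suc (card A))) (cre_vec l (cre_vec k (bstate A)))"
    using assms(1) by (intro homogeneous_cre_vec homogeneous_bstate finite_if_fock)
  then have "vinner M (cre_vec l (cre_vec k (bstate A))) (bstate A) = 0"
    using homogeneous_bstate[OF finite_if_fock[OF assms(1)]] by (rule vinner_homogeneous_orthogonal) simp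
  then show ?thesis
    by (simp add: vinner_ann_vec assms(2,3))
qed

lemma vinner_bstate_cre_cre:
  assumes "A \<in> fock M"
  shows "vinner M (bstate A) (cre_vec k (cre_vec l (bstate A))) = 0"
proof -
  have "homogeneous (Suc (Suc (card A))) (cre_vec k (cre_vec l (bstate A)))"
    using assms by (intro homogeneous_cre_vec homogeneous_bstate finite_if_fock)
  with homogeneous_bstate[OF finite_if_fock[OF assms]] show ?thesis
    by (rule vinner_homogeneous_orthogonal) simp
qed

end

section \<open>Functions of an operator with an orthonormal eigenbasis\<close>

lemma mpow_spectral:
  fixes v :: "'i \<Rightarrow> vec" and \<beta> :: "'i \<Rightarrow> complex"
  assumes "finite I"
    and orthonormal: "\<And>a b. a \<in> I \<Longrightarrow> b \<in> I \<Longrightarrow> vinner M (v a) (v b) = (if a = b then 1 else 0)"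
    and complete: "\<And>S T. S \<in> fock M \<Longrightarrow> T \<in> fock M \<Longrightarrow> (\<Sum>a\<in>I. v a S * cnj (v a T)) = (if S = T then 1 else 0)"
    and eigen: "\<And>a S. a \<in> I \<Longrightarrow> S \<in> fock M \<Longrightarrow> mvmul M B (v a) S = \<beta> a * v a S"
    and "S \<in> fock M" "T \<in> fock M"
  shows "mpow M B n S T = (\<Sum>a\<in>I. \<beta> a ^ n * v a S * cnj (v a T))"
  using assms(6)
proof (induction n arbitrary: T)
  case 0
  then show ?case
    by (simp add: complete assms(5) mid_def)
next
  case (Suc n)
  have B: "B U T = (\<Sum>b\<in>I. \<beta> b * v b U * cnj (v b T))" if "U \<in> fock M" for U
  proof -
    have "B U T = (\<Sum>V\<in>fock M. B U V * (\<Sum>b\<in>I. v b V * cnj (v b T)))"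
      using that Suc.prems by (simp add: complete if_distrib[of "\<lambda>y. _ * y"] cong: if_cong)
    also have "\<dots> = (\<Sum>b\<in>I. mvmul M B (v b) U * cnj (v b T))"
      unfolding mvmul_def sum_distrib_left sum_distrib_right
      by (subst sum.swap) (simp add: mult.assoc)
    finally show ?thesis
      using that by (simp add: eigen)
  qed
  have "mpow M B (Suc n) S T
      = (\<Sum>U\<in>fock M. \<Sum>a\<in>I. \<Sum>b\<in>I. \<beta> a ^ n * v a S * \<beta> b * cnj (v b T) * (cnj (v a U) * v b U))"
    unfolding mpow.simps mmul_def by (simp add: Suc B sum_distrib_left sum_distrib_right mult_ac)
  also have "\<dots> = (\<Sum>a\<in>I. \<Sum>b\<in>I. \<beta> a ^ n * v a S * \<beta> b * cnj (v b T) * vinner M (v a) (v b))"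
    unfolding vinner_def sum_distrib_left by (simp only: sum.swap[of _ _ "fock M"])
  also have "\<dots> = (\<Sum>a\<in>I. \<beta> a ^ Suc n * v a S * cnj (v a T))"
    using \<open>finite I\<close> by (simp add: orthonormal if_distrib[of "\<lambda>y. _ * y"] mult_ac cong: if_cong)
  finally show ?case .
qed

lemma mexp_spectral:
  fixes v :: "'i \<Rightarrow> vec" and \<beta> :: "'i \<Rightarrow> complex"
  assumes "finite I"
    and "\<And>a b. a \<in> I \<Longrightarrow> b \<in> I \<Longrightarrow> vinner M (v a) (v b) = (if a = b then 1 else 0)"
    and "\<And>S T. S \<in> fock M \<Longrightarrow> T \<in> fock M \<Longrightarrow> (\<Sum>a\<in>I. v a S * cnj (v a T)) = (if S = T then 1 else 0)"
    and "\<And>a S. a \<in> I \<Longrightarrow> S \<in> fock M \<Longrightarrow> mvmul M B (v a) S = \<beta> a * v a S"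
    and "S \<in> fock M" "T \<in> fock M"
  shows "mexp M B S T = (\<Sum>a\<in>I. v a S * exp (\<beta> a) * cnj (v a T))"
proof -
  have "(\<lambda>n. \<Sum>a\<in>I. v a S * cnj (v a T) * (\<beta> a ^ n /\<^sub>R fact n))
      sums (\<Sum>a\<in>I. v a S * cnj (v a T) * exp (\<beta> a))"
    by (intro sums_sum sums_mult exp_converges)
  then have "(\<lambda>n. mpow M B n S T / of_nat (fact n)) sums (\<Sum>a\<in>I. v a S * exp (\<beta> a) * cnj (v a T))"
    by (simp add: mpow_spectral[OF assms] scaleR_conv_of_real divide_inverse sum_distrib_left mult_ac)
  then show ?thesis
    unfolding mexp_def by (simp add: sums_iff)
qed

lemma mexp_diagonal:
  assumes "\<And>S T. S \<in> fock M \<Longrightarrow> T \<in> fock M \<Longrightarrow> B S T = (if S = T then \<beta> S else 0)"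
    and "S \<in> fock M" "T \<in> fock M"
  shows "mexp M B S T = (if S = T then exp (\<beta> S) else 0)"
proof -
  have "mexp M B S T = (\<Sum>A\<in>fock M. unit_vec A S * exp (\<beta> A) * cnj (unit_vec A T))"
  proof (rule mexp_spectral[OF finite_fock _ _ _ assms(2,3)])
    fix A B assume "A \<in> fock M" "B \<in> fock M"
    then show "vinner M (unit_vec A) (unit_vec B) = (if A = B then 1 else 0)"
      by (simp add: vinner_def unit_vec_def if_distrib[of "\<lambda>y. _ * y"] cong: if_cong)
  next
    fix S T assume "S \<in> fock M" "T \<in> fock M"
    then show "(\<Sum>A\<in>fock M. unit_vec A S * cnj (unit_vec A T)) = (if S = T then 1 else 0)"
      by (simp add: unit_vec_def if_distrib[of "\<lambda>y. y * _"] cong: if_cong)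
  next
    fix A S assume "A \<in> fock M" "S \<in> fock M"
    then show "mvmul M B (unit_vec A) S = \<beta> A * unit_vec A S"
      by (simp add: mvmul_unit_vec assms(1)) (simp add: unit_vec_def)
  qed
  then show ?thesis
    using assms(2) by (simp add: unit_vec_def if_distrib[of "\<lambda>y. y * _"] cong: if_cong)
qed

lemma mtr_mmul_spectral:
  fixes v :: "'i \<Rightarrow> vec" and c :: "'i \<Rightarrow> complex"
  assumes "\<And>S T. S \<in> fock M \<Longrightarrow> T \<in> fock M \<Longrightarrow> B S T = (\<Sum>a\<in>I. v a S * c a * cnj (v a T))"
  shows "mtr M (mmul M B Z) = (\<Sum>a\<in>I. c a * vinner M (v a) (mvmul M Z (v a)))"
proof -
  have "mtr M (mmul M B Z) = (\<Sum>S\<in>fock M. \<Sum>T\<in>fock M. \<Sum>a\<in>I. c a * (cnj (v a T) * (Z T S * v a S)))"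
    unfolding mtr_def mmul_def by (simp add: assms sum_distrib_left sum_distrib_right mult_ac)
  also have "\<dots> = (\<Sum>a\<in>I. \<Sum>S\<in>fock M. \<Sum>T\<in>fock M. c a * (cnj (v a T) * (Z T S * v a S)))"
    by (simp only: sum.swap[of _ I])
  also have "\<dots> = (\<Sum>a\<in>I. \<Sum>T\<in>fock M. \<Sum>S\<in>fock M. c a * (cnj (v a T) * (Z T S * v a S)))"
    by (rule sum.cong[OF refl]) (rule sum.swap)
  also have "\<dots> = (\<Sum>a\<in>I. c a * vinner M (v a) (mvmul M Z (v a)))"
    by (simp add: vinner_def mvmul_def sum_distrib_left)
  finally show ?thesis .
qed

section \<open>The N-th roots of -1\<close>

text \<open>root_angle N n is omega_n eps, and cis (root_angle N n) for n < N are the N-th roots of -1.\<close>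

definition root_angle :: "nat \<Rightarrow> nat \<Rightarrow> real" where
  "root_angle N n = (2 * real n + 1) * pi / real N"

lemma int_dvd_iff_in_window:
  assumes "- int N < e" "e < 2 * int N"
  shows "int N dvd e \<longleftrightarrow> e = 0 \<or> e = int N"
proof
  assume "int N dvd e"
  then obtain c where c: "e = int N * c"
    by (auto simp: dvd_def)
  have "int N * (-1) < int N * c"
    using assms(1) c by simp
  then have "-1 < c"
    by (rule mult_left_less_imp_less) simp
  have "int N * c < int N * 2"
    using assms(2) c by (simp add: mult.commute)
  then have "c < 2"
    by (rule mult_left_less_imp_less) simp
  note \<open>-1 < c\<close> \<open>c < 2\<close>
  then show "e = 0 \<or> e = int N"
    using c by (cases "c = 0") auto
qed auto

lemma cis_eq_1_iff: "cis a = 1 \<longleftrightarrow> (\<exists>n::int. a = 2 * pi * real_of_int n)"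
proof
  assume "cis a = 1"
  then have "cos a = 1"
    by (simp add: complex_eq_iff)
  then show "\<exists>n::int. a = 2 * pi * real_of_int n"
    by (metis cos_one_2pi_int mult.commute mult.left_commute)
qed auto

lemma cis_2pi_fraction_eq_1:
  assumes "N > 0"
  shows "cis (2 * pi * real_of_int e / real N) = 1 \<longleftrightarrow> int N dvd e"
proof
  assume "cis (2 * pi * real_of_int e / real N) = 1"
  then obtain c :: int where "2 * pi * real_of_int e / real N = 2 * pi * real_of_int c"
    unfolding cis_eq_1_iff by blast
  then have "real_of_int e = real_of_int (c * int N)"
    using assms by (simp add: field_simps)
  then show "int N dvd e"
    by (metis dvd_triv_right of_int_eq_iff)
next
  assume "int N dvd e"
  then obtain c where "e = int N * c"
    by (auto simp: dvd_def)
  then show "cis (2 * pi * real_of_int e / real N) = 1"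
    using assms by (simp add: cis_eq_1_iff)
qed

lemma sum_cis_multiple:
  assumes "N > 0"
  shows "(\<Sum>n<N. cis (2 * pi * real_of_int e * real n / real N)) = (if int N dvd e then of_nat N else 0)"
proof -
  define q where "q = cis (2 * pi * real_of_int e / real N)"
  have powers: "cis (2 * pi * real_of_int e * real n / real N) = q ^ n" for n
    by (simp add: q_def DeMoivre field_simps)
  have "q ^ N = 1"
    using assms by (simp add: q_def DeMoivre)
  with cis_2pi_fraction_eq_1[OF assms] show ?thesis
    by (auto simp: powers sum_gp_strict q_def)
qed

lemma sum_cis_root_angle:
  assumes "N > 0"
  shows "(\<Sum>n<N. cis (root_angle N n * real_of_int e))
    = (if int N dvd e then of_nat N * cis (pi * real_of_int e / real N) else 0)"
proof -
  have "cis (root_angle N n * real_of_int e)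
      = cis (pi * real_of_int e / real N) * cis (2 * pi * real_of_int e * real n / real N)" for n
    unfolding cis_mult root_angle_def using assms by (simp add: field_simps)
  then have "(\<Sum>n<N. cis (root_angle N n * real_of_int e))
      = cis (pi * real_of_int e / real N) * (\<Sum>n<N. cis (2 * pi * real_of_int e * real n / real N))"
    by (simp add: sum_distrib_left)
  then show ?thesis
    by (simp add: sum_cis_multiple[OF assms])
qed

lemma cis_root_angle_pow:
  assumes "N > 0"
  shows "cis (root_angle N n) ^ N = -1"
proof -
  have "real N * root_angle N n = 2 * pi * real n + pi"
    using assms by (simp add: root_angle_def field_simps)
  then have "cis (root_angle N n) ^ N = cis (2 * pi * real n + pi)"
    by (simp add: DeMoivre)
  also have "\<dots> = cis (2 * pi * real n) * cis pi"
    by (simp only: cis_mult)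
  finally show ?thesis
    by simp
qed

lemma cis_root_angle_neq_1: "N > 0 \<Longrightarrow> cis (root_angle N n) \<noteq> 1"
  using cis_root_angle_pow[of N n] by force

lemma inj_on_cis_root_angle:
  assumes "N > 0"
  shows "inj_on (\<lambda>n. cis (root_angle N n)) {..<N}"
proof
  fix a b assume ab: "a \<in> {..<N}" "b \<in> {..<N}" and "cis (root_angle N a) = cis (root_angle N b)"
  then have "cis (root_angle N a - root_angle N b) = 1"
    by (simp add: cis_divide[symmetric])
  moreover have "root_angle N a - root_angle N b = 2 * pi * real_of_int (int a - int b) / real N"
    using assms by (simp add: root_angle_def field_simps)
  ultimately have "int N dvd int a - int b"
    using cis_2pi_fraction_eq_1[OF assms, of "int a - int b"] by (simp only:)
  moreover have "- int N < int a - int b" "int a - int b < 2 * int N"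
    using ab by auto
  ultimately show "a = b"
    using ab by (auto simp: int_dvd_iff_in_window)
qed

lemma prod_one_minus_cis_root_angle:
  assumes "N > 0"
  shows "(\<Prod>n<N. (1 - cis (root_angle N n))) = 2"
proof -
  define p :: "complex poly" where "p = (\<Prod>n<N. [:- cis (root_angle N n), 1:])"
  define q :: "complex poly" where "q = monom 1 N + 1"
  have "p = q"
  proof (rule poly_eqI_degree_lead_coeff[where n = N and A = "(\<lambda>n. cis (root_angle N n)) ` {..<N}"])
    show "N \<le> card ((\<lambda>n. cis (root_angle N n)) ` {..<N})"
      by (simp add: card_image inj_on_cis_root_angle[OF assms])
    have "degree p = N"
      by (simp add: p_def degree_prod_sum_eq)
    moreover have "lead_coeff p = 1"
      unfolding p_def by (subst lead_coeff_prod) simp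
    ultimately show "degree p \<le> N" "coeff p N = coeff q N"
      using assms by (simp_all add: q_def)
    show "degree q \<le> N"
      unfolding q_def by (intro degree_add_le degree_monom_le) simp
    fix z assume "z \<in> (\<lambda>n. cis (root_angle N n)) ` {..<N}"
    then obtain n where "n < N" "z = cis (root_angle N n)"
      by auto
    then show "poly p z = poly q z"
      using cis_root_angle_pow[OF assms, of n]
      by (auto simp: p_def q_def poly_prod poly_monom intro!: prod_zero)
  qed
  then have "poly p 1 = poly q 1"
    by simp
  then show ?thesis
    by (simp add: p_def q_def poly_prod poly_monom)
qed

lemma inverse_one_minus_cis_root_angle:
  assumes "N > 0"
  shows "1 / (1 - cis (root_angle N n)) = (\<Sum>k<N. cis (root_angle N n * real k)) / 2"
proof -
  have "(\<Sum>k<N. cis (root_angle N n * real k)) = (\<Sum>k<N. cis (root_angle N n) ^ k)"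
    by (simp add: DeMoivre mult.commute)
  also have "\<dots> = 2 / (1 - cis (root_angle N n))"
    using cis_root_angle_neq_1[OF assms, of n] cis_root_angle_pow[OF assms, of n]
    by (simp add: sum_gp_strict)
  finally show ?thesis
    using cis_root_angle_neq_1[OF assms, of n] by (simp add: divide_simps)
qed

lemma sum_cis_root_angle_window:
  assumes "N > 0" "- int N < e" "e < 2 * int N"
  shows "(\<Sum>n<N. cis (root_angle N n * real_of_int e))
    = (if e = 0 then of_nat N else 0) - (if e = int N then of_nat N else 0)"
  using assms by (auto simp: sum_cis_root_angle int_dvd_iff_in_window)

lemma sum_cis_root_angle_over_one_minus:
  assumes "N > 0" "t1 < N" "t2 < N"
  shows "(\<Sum>n<N. cis (root_angle N n * real_of_int (int t2 - int t1)) / (1 - cis (root_angle N n)))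
    = (if t2 \<le> t1 then of_nat N / 2 else - (of_nat N / 2))"
proof -
  define d where "d = int t2 - int t1"
  have "cis (root_angle N n * real_of_int d) / (1 - cis (root_angle N n))
      = (\<Sum>k<N. cis (root_angle N n * real_of_int (d + int k))) / 2" for n
  proof -
    have "cis (root_angle N n * real_of_int d) / (1 - cis (root_angle N n))
        = cis (root_angle N n * real_of_int d) * (1 / (1 - cis (root_angle N n)))"
      by simp
    then show ?thesis
      by (simp add: inverse_one_minus_cis_root_angle[OF assms(1)] sum_distrib_left cis_mult distrib_left)
  qed
  then have "(\<Sum>n<N. cis (root_angle N n * real_of_int d) / (1 - cis (root_angle N n)))
      = (\<Sum>k<N. \<Sum>n<N. cis (root_angle N n * real_of_int (d + int k))) / 2"
    by (subst sum.swap) (simp add: sum_divide_distrib)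
  also have "\<dots> = (\<Sum>k<N. (if d + int k = 0 then of_nat N else 0)
      - (if d + int k = int N then of_nat N else 0)) / 2"
    using assms by (intro sum.cong refl arg_cong2[where f = "(/)"] sum_cis_root_angle_window) (auto simp: d_def)
  also have "\<dots> = (if t2 \<le> t1 then of_nat N / 2 else - (of_nat N / 2))"
  proof -
    have "{k. k < N \<and> d + int k = 0} = (if t2 \<le> t1 then {t1 - t2} else {})"
      "{k. k < N \<and> d + int k = int N} = (if t2 \<le> t1 then {} else {N + t1 - t2})"
      using assms by (auto simp: d_def)
    then show ?thesis
      by (simp add: sum_subtractf sum.If_cases lessThan_def Collect_conj_eq[symmetric])
  qed
  finally show ?thesis
    by (simp add: d_def)
qed

section \<open>Antiperiodic Fourier modes\<close>

lemma mode_index_less: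
  fixes L N :: nat
  assumes "n < N" "r < L"
  shows "n * L + r < L * N"
proof -
  have "n * L + r < Suc n * L"
    using assms(2) by simp
  also have "\<dots> \<le> N * L"
    using assms(1) by (intro mult_le_mono1) simp
  finally show ?thesis
    by (simp add: mult.commute)
qed

lemma lessThan_mult_eq_image:
  fixes L N :: nat
  shows "{..<L * N} = (\<lambda>(t, r). t * L + r) ` ({..<N} \<times> {..<L})"
proof (intro equalityI subsetI)
  fix k assume "k \<in> {..<L * N}"
  moreover have "L > 0"
    using \<open>k \<in> {..<L * N}\<close> by (cases L) auto
  ultimately have "k div L < N" "k mod L < L" "k = k div L * L + k mod L"
    by (auto simp: div_less_iff_less_mult mult.commute)
  then show "k \<in> (\<lambda>(t, r). t * L + r) ` ({..<N} \<times> {..<L})"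
    by (intro image_eqI[of _ _ "(k div L, k mod L)"]) auto
next
  fix k assume "k \<in> (\<lambda>(t, r). t * L + r) ` ({..<N} \<times> {..<L})"
  then show "k \<in> {..<L * N}"
    by (auto simp: mode_index_less)
qed

lemma inj_on_mult_add:
  fixes L N :: nat
  shows "inj_on (\<lambda>(t, r). t * L + r) ({..<N} \<times> {..<L})"
proof (rule inj_onI, clarify)
  fix t r t' r' :: nat assume r: "r < L" "r' < L" and eq: "t * L + r = t' * L + r'"
  from r have "(t * L + r) div L = t" "(t' * L + r') div L = t'" "(t * L + r) mod L = r" "(t' * L + r') mod L = r'"
    by simp_all
  with eq show "t = t' \<and> r = r'"
    by metis
qed

lemma sum_lessThan_mult:
  fixes L N :: nat
  shows "(\<Sum>k<L * N. g k) = (\<Sum>t<N. \<Sum>r<L. g (t * L + r))"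
  unfolding lessThan_mult_eq_image sum.reindex[OF inj_on_mult_add]
  by (simp add: sum.cartesian_product case_prod_unfold)

lemma prod_lessThan_mult:
  fixes L N :: nat
  shows "(\<Prod>k<L * N. g k) = (\<Prod>t<N. \<Prod>r<L. g (t * L + r))"
  unfolding lessThan_mult_eq_image prod.reindex[OF inj_on_mult_add]
  by (simp add: prod.cartesian_product case_prod_unfold)

lemma sum_lessThan_mult_mod_eq:
  fixes L N :: nat
  assumes "a < L"
  shows "(\<Sum>k<L * N. if k mod L = a then f k else 0) = (\<Sum>t<N. f (t * L + a))"
proof -
  have "(\<Sum>r<L. if (t * L + r) mod L = a then f (t * L + r) else 0) = f (t * L + a)" for t
  proof -
    have "(\<Sum>r<L. if (t * L + r) mod L = a then f (t * L + r) else 0) = (\<Sum>r<L. if r = a then f (t * L + r) else 0)"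
      by (intro sum.cong refl) simp
    then show ?thesis
      using assms by simp
  qed
  then show ?thesis
    by (simp add: sum_lessThan_mult)
qed

text \<open>
  Row n * L + i of fourier_mode L N expresses ahat_(n,i+1) through the a_(t,i+1) = ann (t * L + i).
\<close>

definition fourier_mode :: "nat \<Rightarrow> nat \<Rightarrow> nat \<Rightarrow> nat \<Rightarrow> complex" where
  "fourier_mode L N m k = (if k mod L = m mod L
     then cis (root_angle N (m div L) * real (k div L)) / complex_of_real (sqrt (real N)) else 0)"

lemma fourier_mode_products:
  "cnj (fourier_mode L N m k) * fourier_mode L N m' k' = (if k mod L = m mod L \<and> k' mod L = m' mod L
     then cnj (cis (root_angle N (m div L) * real (k div L))) * cis (root_angle N (m' div L) * real (k' div L)) / of_nat N
     else 0)"
  by (simp add: fourier_mode_def flip: of_real_mult)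

lemma sum_fourier_mode_cols:
  assumes "L > 0" "k < L * N" "k' < L * N"
  shows "(\<Sum>m<L * N. cnj (fourier_mode L N m k) * fourier_mode L N m k' * f (m div L))
    = (if k mod L = k' mod L
       then (\<Sum>n<N. cis (root_angle N n * real_of_int (int (k' div L) - int (k div L))) * f n) / of_nat N
       else 0)"
proof -
  have "cnj (cis (root_angle N n * real (k div L))) * cis (root_angle N n * real (k' div L))
      = cis (root_angle N n * real_of_int (int (k' div L) - int (k div L)))" for n
    by (simp add: cis_cnj cis_mult algebra_simps)
  then have "(\<Sum>m<L * N. cnj (fourier_mode L N m k) * fourier_mode L N m k' * f (m div L))
      = (\<Sum>m<L * N. if m mod L = k mod L then (if k mod L = k' mod L
          then cis (root_angle N (m div L) * real_of_int (int (k' div L) - int (k div L))) * f (m div L) / of_nat N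
          else 0) else 0)"
    by (intro sum.cong refl) (auto simp: fourier_mode_products)
  then show ?thesis
    using assms by (simp add: sum_lessThan_mult_mod_eq sum_divide_distrib)
qed

lemma fourier_mode_orthonormal_rows:
  assumes "L > 0" "N > 0" and m: "m < L * N" "m' < L * N"
  shows "(\<Sum>k<L * N. fourier_mode L N m k * cnj (fourier_mode L N m' k)) = (if m = m' then 1 else 0)"
proof -
  define n n' where "n = m div L" and "n' = m' div L"
  have n: "n < N" "n' < N"
    using m assms by (auto simp: n_def n'_def div_less_iff_less_mult mult.commute)
  have "cis (root_angle N n * real t) * cnj (cis (root_angle N n' * real t))
      = cis (2 * pi * real_of_int (int n - int n') * real t / real N)" for t
  proof -
    have "root_angle N n * real t + - (root_angle N n' * real t) = 2 * pi * real_of_int (int n - int n') * real t / real N"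
      using assms by (simp add: root_angle_def field_simps)
    then show ?thesis
      by (simp add: cis_cnj cis_mult)
  qed
  then have "(\<Sum>k<L * N. fourier_mode L N m k * cnj (fourier_mode L N m' k))
      = (\<Sum>k<L * N. if k mod L = m mod L then (if m mod L = m' mod L
          then cis (2 * pi * real_of_int (int n - int n') * real (k div L) / real N) / of_nat N else 0) else 0)"
    using fourier_mode_products[of L N m' _ m]
    by (intro sum.cong refl) (auto simp: mult.commute n_def n'_def)
  also have "\<dots> = (if m mod L = m' mod L
      then (\<Sum>t<N. cis (2 * pi * real_of_int (int n - int n') * real t / real N)) / of_nat N else 0)"
    using assms by (simp add: sum_lessThan_mult_mod_eq sum_divide_distrib)
  also have "\<dots> = (if m mod L = m' mod L
      then (if int N dvd int n - int n' then of_nat N else 0) / of_nat N else 0)"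
    by (simp only: sum_cis_multiple[OF assms(2)])
  also have "\<dots> = (if m = m' then 1 else 0)"
  proof -
    have "int N dvd int n - int n' \<longleftrightarrow> n = n'"
      using n by (subst int_dvd_iff_in_window) auto
    moreover have "m = m' \<longleftrightarrow> m mod L = m' mod L \<and> n = n'"
      unfolding n_def n'_def by (metis div_mult_mod_eq)
    ultimately show ?thesis
      using assms by auto
  qed
  finally show ?thesis .
qed

lemma fourier_mode_orthonormal_cols:
  assumes "L > 0" "N > 0" and k: "k < L * N" "k' < L * N"
  shows "(\<Sum>m<L * N. cnj (fourier_mode L N m k) * fourier_mode L N m k') = (if k = k' then 1 else 0)"
proof -
  define t t' where "t = k div L" and "t' = k' div L"
  have t: "t < N" "t' < N"
    using k assms by (auto simp: t_def t'_def div_less_iff_less_mult mult.commute)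
  have "int N dvd int t' - int t \<longleftrightarrow> t = t'"
    using t by (subst int_dvd_iff_in_window) auto
  moreover have "k = k' \<longleftrightarrow> k mod L = k' mod L \<and> t = t'"
    unfolding t_def t'_def by (metis div_mult_mod_eq)
  ultimately show ?thesis
    using sum_fourier_mode_cols[OF assms(1) k, of "\<lambda>_. 1"] assms(2)
    unfolding mult_1_right sum_cis_root_angle[OF assms(2)] t_def[symmetric] t'_def[symmetric]
    by auto
qed

lemma unitary_modes_fourier_mode:
  "L > 0 \<Longrightarrow> N > 0 \<Longrightarrow> unitary_modes (L * N) (fourier_mode L N)"
  by unfold_locales (simp_all add: fourier_mode_orthonormal_rows fourier_mode_orthonormal_cols)

lemma sum_fourier_mode_resolvent:
  assumes "L > 0" "N > 0" "t1 < N" "t2 < N" "i < L" "j < L"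
  shows "(\<Sum>m<L * N. cnj (fourier_mode L N m (t1 * L + i)) * fourier_mode L N m (t2 * L + j)
      / (1 - cis (root_angle N (m div L))))
    = (if i = j then (if t2 \<le> t1 then 1 / 2 else - (1 / 2)) else 0)"
proof -
  have "(\<Sum>m<L * N. cnj (fourier_mode L N m (t1 * L + i)) * fourier_mode L N m (t2 * L + j)
      / (1 - cis (root_angle N (m div L))))
    = (if i = j then (\<Sum>n<N. cis (root_angle N n * real_of_int (int t2 - int t1))
        / (1 - cis (root_angle N n))) / of_nat N else 0)"
    using sum_fourier_mode_cols[of L "t1 * L + i" N "t2 * L + j" "\<lambda>n. 1 / (1 - cis (root_angle N n))"] assms
    by (simp add: mode_index_less)
  then show ?thesis
    using assms by (simp only: sum_cis_root_angle_over_one_minus[OF assms(2-4)]) simp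
qed

lemma exp_omega_time:
  "\<epsilon> \<noteq> 0 \<Longrightarrow> exp (\<i> * complex_of_real (omega N \<epsilon> n * \<epsilon> * real t)) = cis (root_angle N n * real t)"
  by (simp add: omega_def root_angle_def cis_conv_exp)

lemma sum_pairs_eq_sum_modes:
  fixes L N :: nat
  assumes "L > 0"
  shows "(\<Sum>(n, j)\<in>{..<N} \<times> {1..L}. f n j) = (\<Sum>m<L * N. f (m div L) (m mod L + 1))"
proof (rule sum.reindex_bij_witness[where i = "\<lambda>m. (m div L, m mod L + 1)" and j = "\<lambda>(n, j). n * L + (j - 1)"])
  fix p assume "p \<in> {..<N} \<times> {1..L}"
  then obtain n j where "p = (n, j)" "n < N" "1 \<le> j" "j \<le> L"
    by auto
  moreover define r where "r = j - 1"
  ultimately have "p = (n, r + 1)" "n < N" "r < L"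
    by auto
  then show "(\<lambda>(n, j). n * L + (j - 1)) p \<in> {..<L * N}"
    and "((\<lambda>(n, j). n * L + (j - 1)) p div L, (\<lambda>(n, j). n * L + (j - 1)) p mod L + 1) = p"
    and "f ((\<lambda>(n, j). n * L + (j - 1)) p div L) ((\<lambda>(n, j). n * L + (j - 1)) p mod L + 1)
      = (\<lambda>(n, j). f n j) p"
    by (simp_all add: mode_index_less)
next
  fix m assume "m \<in> {..<L * N}"
  then show "(m div L, m mod L + 1) \<in> {..<N} \<times> {1..L}"
    using assms by (auto simp: div_less_iff_less_mult mult.commute Suc_le_eq)
qed (use assms in auto)

section \<open>The twisted trace on the time lattice\<close>

locale fermion_chain =
  fixes L N :: nat and \<epsilon> :: real
  assumes L_pos: "L > 0" and N_pos: "N > 0" and eps_pos: "\<epsilon> > 0"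
begin

sublocale unitary_modes "L * N" "fourier_mode L N"
  using unitary_modes_fourier_mode[OF L_pos N_pos] .

lemma eps_neq_0: "\<epsilon> \<noteq> 0"
  using eps_pos by simp

lemma bann_eq_fourier_sum:
  assumes "m < L * N"
  shows "bann m y S = (\<Sum>t<N. cis (root_angle N (m div L) * real t) / complex_of_real (sqrt (real N))
    * ann_vec (t * L + m mod L) y S)"
proof -
  have "bann m y S = (\<Sum>k<L * N. if k mod L = m mod L
      then cis (root_angle N (m div L) * real (k div L)) / complex_of_real (sqrt (real N)) * ann_vec k y S else 0)"
    unfolding bann_def fourier_mode_def by (intro sum.cong refl) simp
  then show ?thesis
    using L_pos by (simp add: sum_lessThan_mult_mod_eq)
qed

lemma bcre_eq_fourier_sum:
  assumes "m < L * N"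
  shows "bcre m y S = (\<Sum>t<N. cnj (cis (root_angle N (m div L) * real t) / complex_of_real (sqrt (real N)))
    * cre_vec (t * L + m mod L) y S)"
proof -
  have "bcre m y S = (\<Sum>k<L * N. if k mod L = m mod L
      then cnj (cis (root_angle N (m div L) * real (k div L)) / complex_of_real (sqrt (real N))) * cre_vec k y S else 0)"
    unfolding bcre_def fourier_mode_def by (intro sum.cong refl) simp
  then show ?thesis
    using L_pos by (simp add: sum_lessThan_mult_mod_eq)
qed

lemma mvmul_ahat:
  assumes "j \<in> {1..L}" "n < N" "S \<in> fock (L * N)"
  shows "mvmul (L * N) (ahat L N \<epsilon> n j) y S = bann (n * L + (j - 1)) y S"
proof -
  have j: "j - 1 < L"
    using assms(1) by auto
  have "mvmul (L * N) (ahat L N \<epsilon> n j) y S = 1 / complex_of_real (sqrt (real N))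
      * (\<Sum>t<N. cis (root_angle N n * real t) * ann_vec (t * L + (j - 1)) y S)"
    unfolding ahat_def mvmul_mscale mvmul_msum a_H_def exp_omega_time[OF eps_neq_0]
    using assms(3) j by (simp add: mvmul_ann mode_index_less)
  also have "\<dots> = bann (n * L + (j - 1)) y S"
    using j assms(2) by (simp add: bann_eq_fourier_sum mode_index_less sum_distrib_left)
  finally show ?thesis .
qed

lemma mvmul_madj_ahat:
  assumes "j \<in> {1..L}" "n < N" "S \<in> fock (L * N)"
  shows "mvmul (L * N) (madj (ahat L N \<epsilon> n j)) y S = bcre (n * L + (j - 1)) y S"
proof -
  have j: "j - 1 < L"
    using assms(1) by auto
  have "mvmul (L * N) (madj (ahat L N \<epsilon> n j)) y S = cnj (1 / complex_of_real (sqrt (real N)))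
      * (\<Sum>t<N. cnj (cis (root_angle N n * real t)) * cre_vec (t * L + (j - 1)) y S)"
    unfolding ahat_def madj_mscale madj_msum mvmul_mscale mvmul_msum a_H_def cre_def[symmetric]
      exp_omega_time[OF eps_neq_0]
    using assms(3) by (simp add: mvmul_cre)
  also have "\<dots> = bcre (n * L + (j - 1)) y S"
    using j assms(2) by (simp add: bcre_eq_fourier_sum mode_index_less sum_distrib_left)
  finally show ?thesis .
qed

lemma mvmul_Pcal:
  assumes "S \<in> fock (L * N)"
  shows "mvmul (L * N) (Pcal L N \<epsilon>) x S
    = (\<Sum>m<L * N. complex_of_real (omega N \<epsilon> (m div L)) * bcre m (bann m x) S)"
proof -
  have "mvmul (L * N) (mmul (L * N) (madj (ahat L N \<epsilon> n j)) (ahat L N \<epsilon> n j)) x S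
      = bcre (n * L + (j - 1)) (bann (n * L + (j - 1)) x) S" if "n < N" "j \<in> {1..L}" for n j
    unfolding mvmul_mmul mvmul_madj_ahat[OF that(2,1) assms]
    using that by (intro bcre_cong[OF assms]) (simp add: mvmul_ahat)
  then have "mvmul (L * N) (Pcal L N \<epsilon>) x S = (\<Sum>(n, j)\<in>{..<N} \<times> {1..L}.
      complex_of_real (omega N \<epsilon> n) * bcre (n * L + (j - 1)) (bann (n * L + (j - 1)) x) S)"
    unfolding Pcal_def mvmul_msum by (intro sum.cong refl) (auto simp: mvmul_mscale)
  then show ?thesis
    unfolding sum_pairs_eq_sum_modes[OF L_pos] by simp
qed

lemma sum_modes_if_mem:
  "A \<in> fock (L * N) \<Longrightarrow> (\<Sum>m<L * N. if m \<in> A then f m else 0) = sum f A"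
  using fock_subset by (intro sum.mono_neutral_cong_right) auto

lemma number_operator_entry:
  assumes "S \<in> fock (L * N)" "T \<in> fock (L * N)"
  shows "msum ({..<N} \<times> {1..L}) (\<lambda>(t, i). mmul (L * N) (madj (a_H L t i)) (a_H L t i)) S T
    = (if S = T then of_nat (card S) else 0)"
proof -
  have "mmul (L * N) (madj (a_H L t i)) (a_H L t i) S T = (if t * L + (i - 1) \<in> S then unit_vec T S else 0)"
    if "t < N" "i \<in> {1..L}" for t i
  proof -
    have k: "t * L + (i - 1) < L * N"
      using that by (intro mode_index_less) auto
    have "mmul (L * N) (madj (a_H L t i)) (a_H L t i) S T
        = cre_vec (t * L + (i - 1)) (ann_vec (t * L + (i - 1)) (unit_vec T)) S"
      unfolding mvmul_unit_vec[OF assms(2), symmetric] mvmul_mmul a_H_def cre_def[symmetric] mvmul_cre[OF assms(1)]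
      using k by (intro cre_vec_cong[OF assms(1)]) (simp add: mvmul_ann)
    then show ?thesis
      by (simp add: cre_ann_vec_self)
  qed
  then have "msum ({..<N} \<times> {1..L}) (\<lambda>(t, i). mmul (L * N) (madj (a_H L t i)) (a_H L t i)) S T
      = (\<Sum>(t, i)\<in>{..<N} \<times> {1..L}. if t * L + (i - 1) \<in> S then unit_vec T S else 0)"
    unfolding msum_def by (intro sum.cong refl) auto
  also have "\<dots> = (\<Sum>m<L * N. if m \<in> S then unit_vec T S else 0)"
    unfolding sum_pairs_eq_sum_modes[OF L_pos] by simp
  finally show ?thesis
    using assms by (simp add: sum_modes_if_mem unit_vec_def)
qed

lemma Npar_entry:
  assumes "S \<in> fock (L * N)" "T \<in> fock (L * N)"
  shows "Npar L N S T = (if S = T then (-1) ^ card S else 0)"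
proof -
  have "Npar L N S T = (if S = T then exp (\<i> * complex_of_real pi * of_nat (card S)) else 0)"
    unfolding Npar_def
    by (rule mexp_diagonal[OF _ assms]) (simp only: mscale_def number_operator_entry, simp)
  moreover have "exp (\<i> * complex_of_real pi * of_nat (card S)) = (-1) ^ card S"
    by (simp add: mult.commute exp_of_nat_mult exp_pi_i')
  ultimately show ?thesis
    by (simp only:)
qed

definition phase :: "nat set \<Rightarrow> complex" where
  "phase A = (\<Prod>m\<in>A. cis (root_angle N (m div L)))"

lemma mexp_Pcal_spectral:
  assumes "S \<in> fock (L * N)" "T \<in> fock (L * N)"
  shows "mexp (L * N) (mscale (\<i> * complex_of_real \<epsilon>) (Pcal L N \<epsilon>)) S T
    = (\<Sum>A\<in>fock (L * N). bstate A S * phase A * cnj (bstate A T))"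
proof -
  have "mexp (L * N) (mscale (\<i> * complex_of_real \<epsilon>) (Pcal L N \<epsilon>)) S T
      = (\<Sum>A\<in>fock (L * N). bstate A S
          * exp (\<i> * complex_of_real \<epsilon> * (\<Sum>m\<in>A. complex_of_real (omega N \<epsilon> (m div L)))) * cnj (bstate A T))"
  proof (rule mexp_spectral[OF finite_fock _ _ _ assms])
    fix A U assume "A \<in> fock (L * N)" "U \<in> fock (L * N)"
    then show "mvmul (L * N) (mscale (\<i> * complex_of_real \<epsilon>) (Pcal L N \<epsilon>)) (bstate A) U
        = \<i> * complex_of_real \<epsilon> * (\<Sum>m\<in>A. complex_of_real (omega N \<epsilon> (m div L))) * bstate A U"
      by (simp add: mvmul_mscale mvmul_Pcal bcre_bann_bstate if_distrib[of "\<lambda>y. _ * y"] sum_modes_if_mem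
          sum_distrib_right cong: if_cong)
  qed (simp_all add: bstate_orthonormal bstate_complete eq_commute)
  also have "\<dots> = (\<Sum>A\<in>fock (L * N). bstate A S * phase A * cnj (bstate A T))"
  proof (intro sum.cong refl arg_cong2[where f = "(*)"])
    fix A assume "A \<in> fock (L * N)"
    then have "exp (\<i> * complex_of_real \<epsilon> * (\<Sum>m\<in>A. complex_of_real (omega N \<epsilon> (m div L))))
        = (\<Prod>m\<in>A. exp (\<i> * complex_of_real (omega N \<epsilon> (m div L) * \<epsilon> * real (1::nat))))"
      by (simp add: exp_sum[symmetric] finite_if_fock sum_distrib_left mult_ac)
    then show "exp (\<i> * complex_of_real \<epsilon> * (\<Sum>m\<in>A. complex_of_real (omega N \<epsilon> (m div L)))) = phase A"
      by (simp only: exp_omega_time[OF eps_neq_0] phase_def) simp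
  qed
  finally show ?thesis .
qed

lemma PE_spectral:
  assumes "S \<in> fock (L * N)" "T \<in> fock (L * N)"
  shows "PE L N \<epsilon> S T = (\<Sum>A\<in>fock (L * N). bstate A S * ((-1) ^ card A * phase A) * cnj (bstate A T))"
proof -
  have "PE L N \<epsilon> S T = (-1) ^ card S * mexp (L * N) (mscale (\<i> * complex_of_real \<epsilon>) (Pcal L N \<epsilon>)) S T"
    unfolding PE_def mmul_def using assms(1)
    by (simp add: Npar_entry if_distrib[of "\<lambda>y. y * _"] cong: if_cong)
  also have "\<dots> = (\<Sum>A\<in>fock (L * N). (-1) ^ card S * bstate A S * phase A * cnj (bstate A T))"
    by (simp add: mexp_Pcal_spectral assms sum_distrib_left mult.assoc)
  also have "\<dots> = (\<Sum>A\<in>fock (L * N). bstate A S * ((-1) ^ card A * phase A) * cnj (bstate A T))"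
  proof (intro sum.cong refl)
    fix A assume "A \<in> fock (L * N)"
    \<comment> \<open>the parity acts on bstate A by (-1) ^ card A, as bstate A has particle number card A\<close>
    then have "bstate A S \<noteq> 0 \<Longrightarrow> card S = card A"
      using homogeneous_bstate finite_if_fock assms(1) unfolding homogeneous_def by blast
    then show "(-1) ^ card S * bstate A S * phase A * cnj (bstate A T)
        = bstate A S * ((-1) ^ card A * phase A) * cnj (bstate A T)"
      by (cases "bstate A S = 0") auto
  qed
  finally show ?thesis .
qed

lemma mtr_PE_mmul:
  "mtr (L * N) (mmul (L * N) (PE L N \<epsilon>) Z)
    = (\<Sum>A\<in>fock (L * N). (-1) ^ card A * phase A * vinner (L * N) (bstate A) (mvmul (L * N) Z (bstate A)))"
  by (rule mtr_mmul_spectral) (rule PE_spectral)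

lemma sum_Pow_parity_phase:
  "finite X \<Longrightarrow> (\<Sum>A\<in>Pow X. (-1) ^ card A * phase A) = (\<Prod>m\<in>X. 1 - cis (root_angle N (m div L)))"
  by (simp add: prod_diff_conv_sum phase_def)

lemma prod_modes_one_minus_phase: "(\<Prod>m<L * N. 1 - cis (root_angle N (m div L))) = 2 ^ L"
  using prod_one_minus_cis_root_angle[OF N_pos] by (simp add: prod_lessThan_mult flip: prod_power_distrib)

lemma sum_parity_phase_not_containing:
  assumes "m < L * N"
  shows "(\<Sum>A\<in>fock (L * N). (-1) ^ card A * phase A * (if m \<in> A then 0 else 1))
    = 2 ^ L / (1 - cis (root_angle N (m div L)))"
proof -
  have "(\<Sum>A\<in>fock (L * N). (-1) ^ card A * phase A * (if m \<in> A then 0 else 1))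
      = (\<Sum>A\<in>Pow ({..<L * N} - {m}). (-1) ^ card A * phase A)"
    unfolding fock_def by (rule sum.mono_neutral_cong_right) auto
  also have "\<dots> = (\<Prod>m'\<in>{..<L * N} - {m}. 1 - cis (root_angle N (m' div L)))"
    by (simp add: sum_Pow_parity_phase)
  also have "\<dots> = 2 ^ L / (1 - cis (root_angle N (m div L)))"
    using prod.remove[of "{..<L * N}" m "\<lambda>m. 1 - cis (root_angle N (m div L))"] assms
      prod_modes_one_minus_phase cis_root_angle_neq_1[OF N_pos, of "m div L"]
    by (simp add: field_simps)
  finally show ?thesis .
qed

lemma mtr_PE: "mtr (L * N) (PE L N \<epsilon>) = 2 ^ L"
proof -
  have "mtr (L * N) (PE L N \<epsilon>) = mtr (L * N) (mmul (L * N) (PE L N \<epsilon>) mid)"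
    unfolding mtr_def mmul_def by (simp add: mid_def if_distrib[of "\<lambda>y. _ * y"] cong: if_cong)
  also have "\<dots> = (\<Sum>A\<in>fock (L * N). (-1) ^ card A * phase A)"
  proof -
    have "vinner (L * N) (bstate A) (mvmul (L * N) mid (bstate A)) = 1" if "A \<in> fock (L * N)" for A
      using that by (simp add: vinner_cong[OF mvmul_mid] bstate_orthonormal)
    then show ?thesis
      by (simp add: mtr_PE_mmul)
  qed
  also have "\<dots> = 2 ^ L"
    using sum_Pow_parity_phase[of "{..<L * N}"] prod_modes_one_minus_phase by (simp add: fock_def)
  finally show ?thesis .
qed

lemma mtr_PE_ann_cre:
  assumes "k < L * N" "l < L * N"
  shows "mtr (L * N) (mmul (L * N) (mmul (L * N) (PE L N \<epsilon>) (ann k)) (cre l))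
    = 2 ^ L * (\<Sum>m<L * N. cnj (fourier_mode L N m k) * fourier_mode L N m l / (1 - cis (root_angle N (m div L))))"
proof -
  have "mtr (L * N) (mmul (L * N) (mmul (L * N) (PE L N \<epsilon>) (ann k)) (cre l))
      = (\<Sum>A\<in>fock (L * N). (-1) ^ card A * phase A
          * (\<Sum>m<L * N. cnj (fourier_mode L N m k) * fourier_mode L N m l * (if m \<in> A then 0 else 1)))"
    unfolding mmul_assoc mtr_PE_mmul
    using assms by (simp add: vinner_cong[OF mvmul_ann_cre] vinner_bstate_ann_cre)
  also have "\<dots> = (\<Sum>m<L * N. cnj (fourier_mode L N m k) * fourier_mode L N m l
      * (\<Sum>A\<in>fock (L * N). (-1) ^ card A * phase A * (if m \<in> A then 0 else 1)))"
    by (simp add: sum_distrib_left sum_distrib_right sum.swap[of _ "{..<L * N}"] mult_ac)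
  also have "\<dots> = (\<Sum>m<L * N. cnj (fourier_mode L N m k) * fourier_mode L N m l
      * (2 ^ L / (1 - cis (root_angle N (m div L)))))"
    by (intro sum.cong refl) (simp add: sum_parity_phase_not_containing)
  finally show ?thesis
    by (simp add: sum_distrib_left mult_ac)
qed

lemma mtr_PE_ann_cre_modes:
  assumes "t1 < N" "t2 < N" "i < L" "j < L"
  shows "mtr (L * N) (mmul (L * N) (mmul (L * N) (PE L N \<epsilon>) (ann (t1 * L + i))) (cre (t2 * L + j)))
    = (if i = j then (if t2 \<le> t1 then 2 ^ L / 2 else - (2 ^ L / 2)) else 0)"
  using assms by (simp add: mtr_PE_ann_cre mode_index_less sum_fourier_mode_resolvent L_pos N_pos)

lemma mtr_PE_a_H_madj_a_H:
  assumes "t1 < N" "t2 < N" "i \<in> {1..L}" "j \<in> {1..L}"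
  shows "mtr (L * N) (mmul (L * N) (mmul (L * N) (PE L N \<epsilon>) (a_H L t1 i)) (madj (a_H L t2 j)))
    = (if t2 \<le> t1 then mtr L (mmul L (a_h i) (madj (a_h j))) else - mtr L (mmul L (madj (a_h j)) (a_h i)))"
proof -
  have "(2::complex) ^ L / 2 = 2 ^ (L - 1)"
    using L_pos by (cases L) auto
  moreover have "i - 1 < L" "j - 1 < L" "i - 1 = j - 1 \<longleftrightarrow> i = j"
    using assms(3,4) by auto
  ultimately show ?thesis
    using assms(1,2) unfolding a_H_def a_h_def cre_def[symmetric]
    by (simp add: mtr_PE_ann_cre_modes mtr_ann_cre mtr_cre_ann)
qed

lemma mtr_PE_ann_ann:
  assumes "k < L * N" "l < L * N"
  shows "mtr (L * N) (mmul (L * N) (mmul (L * N) (PE L N \<epsilon>) (ann k)) (ann l)) = 0"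
  unfolding mmul_assoc mtr_PE_mmul
  using assms by (simp add: vinner_cong[OF mvmul_ann_ann] vinner_bstate_ann_ann)

lemma mtr_PE_cre_cre: "mtr (L * N) (mmul (L * N) (mmul (L * N) (PE L N \<epsilon>) (cre k)) (cre l)) = 0"
  unfolding mmul_assoc mtr_PE_mmul
  by (simp add: vinner_cong[OF mvmul_cre_cre] vinner_bstate_cre_cre)

end

theorem theorem1:
  fixes L N :: nat and \<epsilon> :: real
  assumes "L \<ge> 1" and "N \<ge> 1" and "\<epsilon> > 0"
  shows "mtr (L * N) (PE L N \<epsilon>) = mtr L mid
    \<and> (\<forall>t1<N. \<forall>t2<N. \<forall>i\<in>{1..L}. \<forall>j\<in>{1..L}.
         mtr (L * N) (mmul (L * N) (mmul (L * N) (PE L N \<epsilon>) (a_H L t1 i)) (madj (a_H L t2 j)))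
         = (if t2 \<le> t1 then mtr L (mmul L (a_h i) (madj (a_h j)))
            else - mtr L (mmul L (madj (a_h j)) (a_h i))))
    \<and> (\<forall>t1<N. \<forall>t2<N. \<forall>i\<in>{1..L}. \<forall>j\<in>{1..L}.
         mtr (L * N) (mmul (L * N) (mmul (L * N) (PE L N \<epsilon>) (a_H L t1 i)) (a_H L t2 j)) = 0
       \<and> mtr (L * N) (mmul (L * N) (mmul (L * N) (PE L N \<epsilon>) (madj (a_H L t1 i))) (madj (a_H L t2 j))) = 0)"
proof -
  interpret fermion_chain L N \<epsilon>
    using assms by unfold_locales auto
  have "mtr (L * N) (mmul (L * N) (mmul (L * N) (PE L N \<epsilon>) (a_H L t1 i)) (a_H L t2 j)) = 0
      \<and> mtr (L * N) (mmul (L * N) (mmul (L * N) (PE L N \<epsilon>) (madj (a_H L t1 i))) (madj (a_H L t2 j))) = 0"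
    if "t1 < N" "t2 < N" "i \<in> {1..L}" "j \<in> {1..L}" for t1 t2 i j
    unfolding a_H_def cre_def[symmetric]
    using that by (intro conjI mtr_PE_ann_ann mtr_PE_cre_cre mode_index_less) auto
  then show ?thesis
    by (simp add: mtr_PE mtr_mid mtr_PE_a_H_madj_a_H)
qed

end
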